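(* Let $V=V_0+V_1$ with $V_0\in L^\infty(\mathbb{R})$, $\operatorname{ess\,inf}V_0>0$, and $V_1\in\mathcal{M}_1(\mathbb{R})$. Then for each $a\in\mathbb{R}$ there exists $u_a\in K_a$ with $I(u_a;V)=\min_{u\in K_a}I(u;V)$; that is, $F(a;V)=I(u_a;V)$ is attained.
   Context: Elements of $H^1(\mathbb{R})$ are identified with their continuous representatives; $\|u\|_\infty:=\|u\|_{L^\infty(\mathbb{R})}$. $\mathcal{M}_1(\mathbb{R})$ is the set of signed Radon measures on $\mathbb{R}$ with finite total variation. The potential $V=V_0+V_1$ acts as the bilinear form $V(u,v):=\int_{\mathbb{R}}V_0uv\,dx+\int_{\mathbb{R}}uv\,dV_1$ on $H^1(\mathbb{R})$, and $I(u;V):=\|u'\|_{L^2(\mathbb{R})}^2+V(u,u)$. For $a\in\mathbb{R}$, $K_a:=\{u\in H^1(\mathbb{R}):u(a)=\|u\|_\infty=1\}$ and $F(a;V):=\inf_{u\in K_a}I(u;V)$. *)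

theory Defs
  imports "HOL-Analysis.Analysis" "HOL-Probability.Essential_Supremum"
begin

definition test_fun :: "(real \<Rightarrow> real) \<Rightarrow> bool" where
  "test_fun \<phi> \<longleftrightarrow> \<phi> differentiable_on UNIV \<and> continuous_on UNIV (deriv \<phi>)
     \<and> (\<exists>R. \<forall>x. R < \<bar>x\<bar> \<longrightarrow> \<phi> x = 0)"

definition weak_deriv :: "(real \<Rightarrow> real) \<Rightarrow> (real \<Rightarrow> real) \<Rightarrow> bool" where
  "weak_deriv u g \<longleftrightarrow> g \<in> borel_measurable lborel \<and>
     (\<forall>\<phi>. test_fun \<phi> \<longrightarrow>
        integral\<^sup>L lborel (\<lambda>x. u x * deriv \<phi> x) = - integral\<^sup>L lborel (\<lambda>x. g x * \<phi> x))"

text \<open>H^1(R), elements identified with their continuous representatives.\<close>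
definition H1 :: "(real \<Rightarrow> real) set" where
  "H1 = {u. continuous_on UNIV u \<and> u \<in> borel_measurable lborel
           \<and> integrable lborel (\<lambda>x. (u x)\<^sup>2)
           \<and> (\<exists>g. weak_deriv u g \<and> integrable lborel (\<lambda>x. (g x)\<^sup>2))}"

text \<open>The (a.e. unique) weak derivative u' of u in H^1.\<close>
definition H1_deriv :: "(real \<Rightarrow> real) \<Rightarrow> real \<Rightarrow> real" where
  "H1_deriv u = (SOME g. weak_deriv u g \<and> integrable lborel (\<lambda>x. (g x)\<^sup>2))"

definition sup_norm :: "(real \<Rightarrow> real) \<Rightarrow> real" where
  "sup_norm u = (SUP x. \<bar>u x\<bar>)"

text \<open>A signed Radon measure of finite total variation V1 is represented by its
  Jordan decomposition V1 = mu_p - mu_m with finite Borel measures mu_p, mu_m.\<close>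
definition finite_borel_measure :: "real measure \<Rightarrow> bool" where
  "finite_borel_measure \<mu> \<longleftrightarrow> sets \<mu> = sets borel \<and> finite_measure \<mu>"

definition Vform :: "(real \<Rightarrow> real) \<Rightarrow> real measure \<Rightarrow> real measure
                     \<Rightarrow> (real \<Rightarrow> real) \<Rightarrow> (real \<Rightarrow> real) \<Rightarrow> real" where
  "Vform V0 mu_p mu_m u v =
     integral\<^sup>L lborel (\<lambda>x. V0 x * u x * v x)
     + (integral\<^sup>L mu_p (\<lambda>x. u x * v x) - integral\<^sup>L mu_m (\<lambda>x. u x * v x))"

definition Ifun :: "(real \<Rightarrow> real) \<Rightarrow> (real \<Rightarrow> real) \<Rightarrow> real measure \<Rightarrow> real measure \<Rightarrow> real" where
  "Ifun u V0 mu_p mu_m = integral\<^sup>L lborel (\<lambda>x. (H1_deriv u x)\<^sup>2) + Vform V0 mu_p mu_m u u"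

definition Kset :: "real \<Rightarrow> (real \<Rightarrow> real) set" where
  "Kset a = {u \<in> H1. u a = 1 \<and> sup_norm u = 1}"

definition Ffun :: "real \<Rightarrow> (real \<Rightarrow> real) \<Rightarrow> real measure \<Rightarrow> real measure \<Rightarrow> real" where
  "Ffun a V0 mu_p mu_m = (INF u \<in> Kset a. Ifun u V0 mu_p mu_m)"

end

theory Submission
  imports Defs "HOL-Complex_Analysis.Great_Picard"
begin

text \<open>The direct method, with weak compactness replaced by elementary arguments. Along a minimising
  sequence in \<open>K\<^sub>a\<close> the energy \<open>\<integral>u'\<^sup>2\<close> stays bounded, so the sequence is uniformly bounded
  and satisfies a uniform estimate \<open>|u(x) - u(y)|\<^sup>2 \<le> M |x - y|\<close>; a diagonal subsequence
  converges pointwise to some \<open>u\<close> with \<open>|u| \<le> 1\<close> and \<open>u(a) = 1\<close>, and dominated convergence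
  takes care of the term \<open>\<integral>u\<^sup>2 dV\<^sub>1\<close>. For the coercive quadratic part
  \<open>Q(u) = \<integral>u'\<^sup>2 + \<integral>V\<^sub>0u\<^sup>2\<close> consider the sets \<open>C\<^sub>n\<close> of \<open>v \<in> K\<^sub>a\<close> that stay pointwise
  within the \<open>n\<close>-th tail deviation of the subsequence from \<open>u\<close>. They are convex and decreasing,
  so by the parallelogram law near-minimisers of \<open>Q\<close> over \<open>C\<^sub>n\<close> form a Cauchy sequence in
  \<open>H\<^sup>1\<close>, whose limit can only be \<open>u\<close>. Hence \<open>u \<in> H\<^sup>1\<close> and \<open>Q(u)\<close> is the limit of the
  infima of \<open>Q\<close> over \<open>C\<^sub>n\<close>, which is at most the limit inferior of \<open>Q\<close> along the
  subsequence; so \<open>u\<close> attains \<open>F(a;V)\<close>.\<close>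

section \<open>Square-integrable functions\<close>

definition L2 :: "(real \<Rightarrow> real) \<Rightarrow> bool" where
  "L2 f \<longleftrightarrow> f \<in> borel_measurable lborel \<and> integrable lborel (\<lambda>x. (f x)\<^sup>2)"

lemma L2_mult_integrable:
  assumes "L2 f" "L2 g" shows "integrable lborel (\<lambda>x. f x * g x)"
proof (rule Bochner_Integration.integrable_bound)
  show "integrable lborel (\<lambda>x. (f x)\<^sup>2 + (g x)\<^sup>2)" using assms by (auto simp: L2_def)
  show "(\<lambda>x. f x * g x) \<in> borel_measurable lborel" using assms by (auto simp: L2_def)
  show "AE x in lborel. norm (f x * g x) \<le> norm ((f x)\<^sup>2 + (g x)\<^sup>2)"
  proof (rule AE_I2)
    fix x
    have "2 * \<bar>f x * g x\<bar> \<le> (f x)\<^sup>2 + (g x)\<^sup>2"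
      using sum_squares_bound[of "\<bar>f x\<bar>" "\<bar>g x\<bar>"] by (simp add: abs_mult power2_eq_square)
    then show "norm (f x * g x) \<le> norm ((f x)\<^sup>2 + (g x)\<^sup>2)" by simp
  qed
qed

lemma L2_add: assumes "L2 f" "L2 g" shows "L2 (\<lambda>x. f x + g x)"
proof -
  have "integrable lborel (\<lambda>x. (f x)\<^sup>2 + (g x)\<^sup>2 + 2 * (f x * g x))"
    using assms L2_mult_integrable[OF assms] by (auto simp: L2_def)
  then show ?thesis using assms by (auto simp: L2_def power2_sum algebra_simps)
qed

lemma L2_cmult: assumes "L2 f" shows "L2 (\<lambda>x. c * f x)"
  using assms by (auto simp: L2_def power_mult_distrib)

lemma L2_diff: assumes "L2 f" "L2 g" shows "L2 (\<lambda>x. f x - g x)"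
  using L2_add[OF assms(1) L2_cmult[OF assms(2), of "-1"]] by simp

lemma L2_abs: assumes "L2 f" shows "L2 (\<lambda>x. \<bar>f x\<bar>)"
  using assms by (auto simp: L2_def)

lemma L2_indicator:
  assumes "A \<in> sets lborel" "emeasure lborel A < \<infinity>" shows "L2 (indicator A)"
proof -
  have "(\<lambda>x. (indicator A x :: real)\<^sup>2) = indicator A" by (auto simp: indicator_def)
  then show ?thesis using assms by (auto simp: L2_def)
qed

lemma L2_indicator_interval: "L2 (indicator {a<..b})" "L2 (indicator {a..b})"
  by (cases "a \<le> b"; auto intro!: L2_indicator simp: emeasure_lborel_Icc_eq)+

lemma nonneg_quadratic_discriminant:
  fixes A B C :: real
  assumes "0 \<le> A" "\<And>t. 0 \<le> t\<^sup>2 * A - 2 * t * B + C"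
  shows "B\<^sup>2 \<le> A * C"
proof (cases "A = 0")
  case True
  have "B = 0"
  proof (rule ccontr)
    assume "B \<noteq> 0"
    have "0 \<le> ((C + 1) / (2 * B))\<^sup>2 * A - 2 * ((C + 1) / (2 * B)) * B + C" by (rule assms)
    also have "\<dots> = -1" using \<open>B \<noteq> 0\<close> True by (simp add: field_simps)
    finally show False by simp
  qed
  then show ?thesis using True by simp
next
  case False
  then have "A > 0" using assms(1) by simp
  have "0 \<le> (B/A)\<^sup>2 * A - 2 * (B/A) * B + C" by (rule assms)
  also have "\<dots> = (A * C - B\<^sup>2) / A" using \<open>A > 0\<close> by (simp add: field_simps power2_eq_square)
  finally show ?thesis using \<open>A > 0\<close> by (simp add: zero_le_divide_iff)
qed

lemma L2_Cauchy_Schwarz: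
  assumes "L2 f" "L2 g"
  shows "(\<integral>x. f x * g x \<partial>lborel)\<^sup>2 \<le> (\<integral>x. (f x)\<^sup>2 \<partial>lborel) * (\<integral>x. (g x)\<^sup>2 \<partial>lborel)"
proof (rule nonneg_quadratic_discriminant)
  fix t
  have "(\<lambda>x. (t * f x - g x)\<^sup>2) = (\<lambda>x. t\<^sup>2 * (f x)\<^sup>2 - 2 * t * (f x * g x) + (g x)\<^sup>2)"
    by (auto simp: power2_eq_square algebra_simps)
  then have "(\<integral>x. (t * f x - g x)\<^sup>2 \<partial>lborel)
      = t\<^sup>2 * (\<integral>x. (f x)\<^sup>2 \<partial>lborel) - 2 * t * (\<integral>x. f x * g x \<partial>lborel) + (\<integral>x. (g x)\<^sup>2 \<partial>lborel)"
    using L2_mult_integrable[OF assms] assms by (simp add: L2_def)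
  moreover have "0 \<le> (\<integral>x. (t * f x - g x)\<^sup>2 \<partial>lborel)" by simp
  ultimately show "0 \<le> t\<^sup>2 * (\<integral>x. (f x)\<^sup>2 \<partial>lborel) - 2 * t * (\<integral>x. f x * g x \<partial>lborel)
      + (\<integral>x. (g x)\<^sup>2 \<partial>lborel)" by simp
qed simp

lemma L2_inner_tendsto:
  assumes "\<And>n. L2 (f n)" "L2 f0" "L2 \<psi>" "(\<lambda>n. \<integral>x. (f n x - f0 x)\<^sup>2 \<partial>lborel) \<longlonglongrightarrow> 0"
  shows "(\<lambda>n. \<integral>x. f n x * \<psi> x \<partial>lborel) \<longlonglongrightarrow> (\<integral>x. f0 x * \<psi> x \<partial>lborel)"
proof -
  have diff: "(\<integral>x. f n x * \<psi> x \<partial>lborel) - (\<integral>x. f0 x * \<psi> x \<partial>lborel) = (\<integral>x. (f n x - f0 x) * \<psi> x \<partial>lborel)"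
    for n using L2_mult_integrable assms(1-3) by (simp add: left_diff_distrib)
  have "(\<lambda>n. (\<integral>x. (f n x - f0 x) * \<psi> x \<partial>lborel)\<^sup>2) \<longlonglongrightarrow> 0"
  proof (rule tendsto_sandwich[OF always_eventually always_eventually tendsto_const])
    show "\<forall>n. (\<integral>x. (f n x - f0 x) * \<psi> x \<partial>lborel)\<^sup>2 \<le> (\<integral>x. (f n x - f0 x)\<^sup>2 \<partial>lborel) * (\<integral>x. (\<psi> x)\<^sup>2 \<partial>lborel)"
      using L2_Cauchy_Schwarz L2_diff assms(1-3) by blast
    show "(\<lambda>n. (\<integral>x. (f n x - f0 x)\<^sup>2 \<partial>lborel) * (\<integral>x. (\<psi> x)\<^sup>2 \<partial>lborel)) \<longlonglongrightarrow> 0"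
      using tendsto_mult_left_zero[OF assms(4)] .
  qed simp
  from tendsto_real_sqrt[OF this]
  have "(\<lambda>n. \<integral>x. (f n x - f0 x) * \<psi> x \<partial>lborel) \<longlonglongrightarrow> 0"
    by (simp add: tendsto_rabs_zero_iff)
  then show ?thesis by (simp add: LIM_zero_iff diff[symmetric])
qed

lemma L2_square_integral_tendsto:
  assumes "\<And>n. L2 (f n)" "L2 f0" "(\<lambda>n. \<integral>x. (f n x - f0 x)\<^sup>2 \<partial>lborel) \<longlonglongrightarrow> 0"
  shows "(\<lambda>n. \<integral>x. (f n x)\<^sup>2 \<partial>lborel) \<longlonglongrightarrow> (\<integral>x. (f0 x)\<^sup>2 \<partial>lborel)"
proof -
  have eq: "(\<integral>x. (f n x)\<^sup>2 \<partial>lborel)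
      = (\<integral>x. (f n x - f0 x)\<^sup>2 \<partial>lborel) + 2 * (\<integral>x. f n x * f0 x \<partial>lborel) - (\<integral>x. (f0 x)\<^sup>2 \<partial>lborel)" for n
  proof -
    have "(\<lambda>x. (f n x)\<^sup>2) = (\<lambda>x. (f n x - f0 x)\<^sup>2 + 2 * (f n x * f0 x) - (f0 x)\<^sup>2)"
      by (auto simp: power2_eq_square algebra_simps)
    then show ?thesis
      using L2_diff[OF assms(1,2)] L2_mult_integrable[OF assms(1,2)] assms(2) by (simp add: L2_def)
  qed
  have "(\<lambda>n. \<integral>x. f n x * f0 x \<partial>lborel) \<longlonglongrightarrow> (\<integral>x. (f0 x)\<^sup>2 \<partial>lborel)"
    using L2_inner_tendsto[OF assms(1,2,2,3)] by (simp add: power2_eq_square)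
  from tendsto_diff[OF tendsto_add[OF assms(3) tendsto_mult[OF tendsto_const[of 2] this]]
      tendsto_const[of "\<integral>x. (f0 x)\<^sup>2 \<partial>lborel"]]
  show ?thesis unfolding eq by simp
qed

lemma Cauchy_geometric_subseq:
  fixes d :: "nat \<Rightarrow> nat \<Rightarrow> real"
  assumes "\<And>e. e > 0 \<Longrightarrow> \<exists>N. \<forall>n\<ge>N. \<forall>m\<ge>N. d n m < e" "0 < q"
  obtains r where "strict_mono r" "\<And>k n m. r k \<le> n \<Longrightarrow> r k \<le> m \<Longrightarrow> d n m < q ^ k"
proof -
  have "\<forall>k. \<exists>N. \<forall>n\<ge>N. \<forall>m\<ge>N. d n m < q ^ k" using assms by simp
  then obtain N where N: "\<And>k n m. N k \<le> n \<Longrightarrow> N k \<le> m \<Longrightarrow> d n m < q ^ k" by metis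
  define r where "r k = k + (\<Sum>j\<le>k. N j)" for k
  have "strict_mono r" by (rule strict_mono_Suc_iff[THEN iffD2]) (simp add: r_def)
  moreover have "N k \<le> r k" for k
    using member_le_sum[of k "{..k}" N] by (simp add: r_def)
  ultimately show ?thesis using that N by (meson order_trans)
qed

lemma abs_le_pow_square_bound:
  fixes a :: real
  shows "\<bar>a\<bar> \<le> 2 ^ k * a\<^sup>2 + (1/2) ^ k"
proof (cases "\<bar>a\<bar> \<le> (1/2) ^ k")
  case False
  then have "1 < 2 ^ k * \<bar>a\<bar>" by (simp add: power_one_over field_simps)
  then have "\<bar>a\<bar> \<le> (2 ^ k * \<bar>a\<bar>) * \<bar>a\<bar>" by (simp add: mult_le_cancel_right1)
  then show ?thesis by (simp add: power2_eq_square add_increasing2)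
qed (simp add: add_increasing)

lemma AE_summable_if_L2_geometric:
  assumes h: "\<And>k. L2 (h k)" and bound: "\<And>k. (\<integral>x. (h k x)\<^sup>2 \<partial>lborel) \<le> (1/8) ^ k"
  shows "AE x in lborel. summable (\<lambda>k. \<bar>h k x\<bar>)"
proof -
  have [measurable]: "h k \<in> borel_measurable lborel" for k using h by (simp add: L2_def)
  define S where "S x = (\<Sum>k. ennreal (2 ^ k * (h k x)\<^sup>2))" for x
  have "(\<integral>\<^sup>+x. S x \<partial>lborel) = (\<Sum>k. \<integral>\<^sup>+x. ennreal (2 ^ k * (h k x)\<^sup>2) \<partial>lborel)"
    unfolding S_def by (rule nn_integral_suminf) measurable
  also have "\<dots> \<le> (\<Sum>k. ennreal ((1/4) ^ k))"
  proof (intro suminf_le allI)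
    fix k
    have "(\<integral>\<^sup>+x. ennreal (2 ^ k * (h k x)\<^sup>2) \<partial>lborel) = ennreal (2 ^ k * (\<integral>x. (h k x)\<^sup>2 \<partial>lborel))"
      using h[of k] by (subst nn_integral_eq_integral) (auto simp: L2_def)
    also have "2 ^ k * (\<integral>x. (h k x)\<^sup>2 \<partial>lborel) \<le> (2::real) ^ k * (1/8) ^ k"
      using bound by (intro mult_left_mono) auto
    also have "(2::real) ^ k * (1/8) ^ k = (1/4) ^ k" by (simp add: power_mult_distrib[symmetric])
    finally show "(\<integral>\<^sup>+x. ennreal (2 ^ k * (h k x)\<^sup>2) \<partial>lborel) \<le> ennreal ((1/4) ^ k)"
      by (simp add: ennreal_leI)
  qed auto
  also have "\<dots> = ennreal (\<Sum>k. (1/4) ^ k)"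
    by (rule suminf_ennreal2) (auto intro: summable_geometric)
  finally have "AE x in lborel. S x \<noteq> \<infinity>"
    by (intro nn_integral_PInf_AE) (auto simp: S_def top_unique)
  then show ?thesis
  proof eventually_elim
    case (elim x)
    then have "summable (\<lambda>k. 2 ^ k * (h k x)\<^sup>2)"
      unfolding S_def by (intro summable_suminf_not_top) auto
    then have "summable (\<lambda>k. 2 ^ k * (h k x)\<^sup>2 + (1/2) ^ k)"
      by (intro summable_add summable_geometric) auto
    then show "summable (\<lambda>k. \<bar>h k x\<bar>)"
      by (rule summable_comparison_test[rotated]) (auto intro: exI[of _ 0] abs_le_pow_square_bound)
  qed
qed

lemma L2_Fatou:
  assumes f: "\<And>n. L2 (f n)" and [measurable]: "g \<in> borel_measurable lborel"
    and conv: "AE x in lborel. (\<lambda>k. f (r k) x) \<longlonglongrightarrow> g x"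
    and bound: "\<forall>\<^sub>F k in sequentially. (\<integral>x. (f n x - f (r k) x)\<^sup>2 \<partial>lborel) \<le> b" and "0 \<le> b"
  shows "integrable lborel (\<lambda>x. (f n x - g x)\<^sup>2)" "(\<integral>x. (f n x - g x)\<^sup>2 \<partial>lborel) \<le> b"
proof -
  have [measurable]: "f n \<in> borel_measurable lborel" for n using f by (simp add: L2_def)
  have "(\<integral>\<^sup>+x. ennreal ((f n x - g x)\<^sup>2) \<partial>lborel)
      = (\<integral>\<^sup>+x. liminf (\<lambda>k. ennreal ((f n x - f (r k) x)\<^sup>2)) \<partial>lborel)"
  proof (rule nn_integral_cong_AE)
    show "AE x in lborel. ennreal ((f n x - g x)\<^sup>2) = liminf (\<lambda>k. ennreal ((f n x - f (r k) x)\<^sup>2))"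
      using conv
    proof eventually_elim
      case (elim x)
      then have "(\<lambda>k. ennreal ((f n x - f (r k) x)\<^sup>2)) \<longlonglongrightarrow> ennreal ((f n x - g x)\<^sup>2)"
        by (intro tendsto_ennrealI tendsto_intros)
      then show ?case by (intro lim_imp_Liminf[symmetric]) auto
    qed
  qed
  also have "\<dots> \<le> liminf (\<lambda>k. \<integral>\<^sup>+x. ennreal ((f n x - f (r k) x)\<^sup>2) \<partial>lborel)"
    by (rule nn_integral_liminf) measurable
  also have "\<dots> \<le> ennreal b"
  proof (rule Liminf_le)
    show "\<forall>\<^sub>F k in sequentially. (\<integral>\<^sup>+x. ennreal ((f n x - f (r k) x)\<^sup>2) \<partial>lborel) \<le> ennreal b"
      using bound
    proof eventually_elim
      case (elim k)
      have "integrable lborel (\<lambda>x. (f n x - f (r k) x)\<^sup>2)"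
        using L2_diff[OF f f] by (simp add: L2_def)
      then show ?case using elim by (subst nn_integral_eq_integral) (auto intro: ennreal_leI)
    qed
  qed simp
  finally have fin: "(\<integral>\<^sup>+x. ennreal ((f n x - g x)\<^sup>2) \<partial>lborel) \<le> ennreal b" .
  show int: "integrable lborel (\<lambda>x. (f n x - g x)\<^sup>2)"
  proof (rule integrableI_bounded)
    show "(\<integral>\<^sup>+x. ennreal (norm ((f n x - g x)\<^sup>2)) \<partial>lborel) < \<infinity>"
      using fin by (simp add: le_less_trans)
  qed measurable
  have "ennreal (\<integral>x. (f n x - g x)\<^sup>2 \<partial>lborel) \<le> ennreal b"
    using fin int by (subst nn_integral_eq_integral[symmetric]) auto
  then show "(\<integral>x. (f n x - g x)\<^sup>2 \<partial>lborel) \<le> b" using \<open>0 \<le> b\<close> by simp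
qed

lemma convergent_if_summable_increments:
  fixes a :: "nat \<Rightarrow> real"
  assumes "summable (\<lambda>k. \<bar>a (Suc k) - a k\<bar>)"
  shows "a \<longlonglongrightarrow> a 0 + (\<Sum>k. a (Suc k) - a k)"
proof -
  have "(\<lambda>n. a 0 + (\<Sum>k<n. a (Suc k) - a k)) \<longlonglongrightarrow> a 0 + (\<Sum>k. a (Suc k) - a k)"
    using summable_LIMSEQ[OF summable_rabs_cancel[OF assms]] by (intro tendsto_add tendsto_const)
  then show ?thesis by (simp add: sum_lessThan_telescope)
qed

lemma L2_complete:
  assumes f: "\<And>n. L2 (f n)"
    and cauchy: "\<And>e. e > 0 \<Longrightarrow> \<exists>N. \<forall>n\<ge>N. \<forall>m\<ge>N. (\<integral>x. (f n x - f m x)\<^sup>2 \<partial>lborel) < e"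
  obtains g r where "L2 g" "strict_mono r" "AE x in lborel. (\<lambda>k. f (r k) x) \<longlonglongrightarrow> g x"
    "(\<lambda>n. \<integral>x. (f n x - g x)\<^sup>2 \<partial>lborel) \<longlonglongrightarrow> 0"
proof -
  have [measurable]: "f n \<in> borel_measurable lborel" for n using f by (simp add: L2_def)
  obtain r where r: "strict_mono r"
    and rN: "\<And>k n m. r k \<le> n \<Longrightarrow> r k \<le> m \<Longrightarrow> (\<integral>x. (f n x - f m x)\<^sup>2 \<partial>lborel) < (1/8) ^ k"
    using Cauchy_geometric_subseq[OF cauchy, of "1/8"] by auto
  have rle: "r j \<le> r k" if "j \<le> k" for j k using r that by (simp add: strict_mono_less_eq)
  have "AE x in lborel. summable (\<lambda>k. \<bar>f (r (Suc k)) x - f (r k) x\<bar>)"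
    using rN rle by (intro AE_summable_if_L2_geometric L2_diff f less_imp_le) auto
  then have "AE x in lborel. convergent (\<lambda>k. f (r k) x)"
    by eventually_elim (auto simp: convergent_def dest: convergent_if_summable_increments)
  \<comment> \<open>\<open>limsup\<close> rather than \<open>lim\<close> makes the a.e. limit Borel measurable by construction\<close>
  define g where "g x = real_of_ereal (limsup (\<lambda>k. ereal (f (r k) x)))" for x
  have gm: "g \<in> borel_measurable lborel" unfolding g_def by measurable
  from \<open>AE x in lborel. convergent _\<close> have conv: "AE x in lborel. (\<lambda>k. f (r k) x) \<longlonglongrightarrow> g x"
  proof eventually_elim
    case (elim x)
    then obtain L where L: "(\<lambda>k. f (r k) x) \<longlonglongrightarrow> L" by (auto simp: convergent_def)
    then have "limsup (\<lambda>k. ereal (f (r k) x)) = ereal L" by (intro lim_imp_Limsup) auto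
    then show ?case using L by (simp add: g_def)
  qed
  have bound: "integrable lborel (\<lambda>x. (f n x - g x)\<^sup>2)" "(\<integral>x. (f n x - g x)\<^sup>2 \<partial>lborel) \<le> (1/8) ^ j"
    if "r j \<le> n" for n j
  proof -
    have "\<forall>\<^sub>F k in sequentially. (\<integral>x. (f n x - f (r k) x)\<^sup>2 \<partial>lborel) \<le> (1/8) ^ j"
      using rN[OF that] rle by (intro eventually_sequentiallyI[of j] less_imp_le) (auto intro: order_trans)
    then show "integrable lborel (\<lambda>x. (f n x - g x)\<^sup>2)" "(\<integral>x. (f n x - g x)\<^sup>2 \<partial>lborel) \<le> (1/8) ^ j"
      using L2_Fatou[where f=f and r=r and g=g, OF f gm conv] by auto
  qed
  have "L2 (\<lambda>x. f (r 0) x - (f (r 0) x - g x))"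
    by (rule L2_diff[OF f]) (use bound(1)[of 0 "r 0"] gm in \<open>simp add: L2_def\<close>)
  then have "L2 g" by simp
  moreover have "(\<lambda>n. \<integral>x. (f n x - g x)\<^sup>2 \<partial>lborel) \<longlonglongrightarrow> 0"
  proof (rule LIMSEQ_I)
    fix e :: real assume "0 < e"
    obtain j where j: "(1/8) ^ j < e" using real_arch_pow_inv[OF \<open>0 < e\<close>, of "1/8"] by auto
    have "norm ((\<integral>x. (f n x - g x)\<^sup>2 \<partial>lborel) - 0) < e" if "r j \<le> n" for n
      using bound(2)[OF that] j by simp
    then show "\<exists>N. \<forall>n\<ge>N. norm ((\<integral>x. (f n x - g x)\<^sup>2 \<partial>lborel) - 0) < e" by blast
  qed
  ultimately show ?thesis using that r conv by blast
qed

section \<open>Test functions and weak derivatives\<close>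

lemma test_fun_DERIV: "test_fun \<phi> \<Longrightarrow> (\<phi> has_real_derivative deriv \<phi> x) (at x)"
  unfolding test_fun_def by (simp add: DERIV_deriv_iff_real_differentiable differentiable_on_def)

lemma test_fun_continuous: "test_fun \<phi> \<Longrightarrow> continuous_on UNIV \<phi>"
  unfolding test_fun_def using differentiable_imp_continuous_on by blast

lemma test_fun_support:
  assumes "test_fun \<phi>"
  obtains R where "R > 0" "\<And>x. R < \<bar>x\<bar> \<Longrightarrow> \<phi> x = 0" "\<And>x. R < \<bar>x\<bar> \<Longrightarrow> deriv \<phi> x = 0"
proof -
  obtain R0 where R0: "\<And>x. R0 < \<bar>x\<bar> \<Longrightarrow> \<phi> x = 0" using assms by (auto simp: test_fun_def)
  have "deriv \<phi> x = 0" if "\<bar>R0\<bar> + 1 < \<bar>x\<bar>" for x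
  proof -
    have "(\<phi> has_real_derivative 0) (at x)"
    proof (rule has_field_derivative_transform_within_open[where S="{t. R0 < \<bar>t\<bar>}"])
      show "((\<lambda>_. 0) has_real_derivative 0) (at x)" by simp
      show "open {t::real. R0 < \<bar>t\<bar>}" by (intro open_Collect_less continuous_intros)
    qed (use that R0 in auto)
    then show ?thesis using DERIV_imp_deriv by blast
  qed
  then show ?thesis using that[of "\<bar>R0\<bar> + 1"] R0 by simp
qed

lemma integrable_continuous_compact_support:
  fixes h :: "real \<Rightarrow> real"
  assumes "continuous_on UNIV h" "\<And>x. R < \<bar>x\<bar> \<Longrightarrow> h x = 0"
  shows "integrable lborel h"
proof -
  have "set_integrable lborel {-R..R} h"
    by (rule borel_integrable_atLeastAtMost') (rule continuous_on_subset[OF assms(1)], simp)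
  moreover have "(\<lambda>x. indicator {-R..R} x *\<^sub>R h x) = h"
    using assms(2) by (force simp: indicator_def abs_le_iff)
  ultimately show ?thesis by (simp add: set_integrable_def)
qed

lemma L2_continuous_compact_support:
  fixes h :: "real \<Rightarrow> real"
  assumes "continuous_on UNIV h" "\<And>x. R < \<bar>x\<bar> \<Longrightarrow> h x = 0"
  shows "L2 h"
  using integrable_continuous_compact_support[of "\<lambda>x. (h x)\<^sup>2" R] assms
    borel_measurable_continuous_onI[OF assms(1)]
  by (auto simp: L2_def intro!: continuous_intros)

lemma test_fun_L2:
  assumes "test_fun \<phi>" shows "L2 \<phi>" "L2 (deriv \<phi>)"
proof -
  obtain R where "R > 0" "\<And>x. R < \<bar>x\<bar> \<Longrightarrow> \<phi> x = 0" "\<And>x. R < \<bar>x\<bar> \<Longrightarrow> deriv \<phi> x = 0"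
    using test_fun_support[OF assms] by blast
  moreover have "continuous_on UNIV (deriv \<phi>)" using assms by (simp add: test_fun_def)
  ultimately show "L2 \<phi>" "L2 (deriv \<phi>)"
    using L2_continuous_compact_support test_fun_continuous[OF assms] by auto
qed

lemma weak_deriv_linear_combination:
  assumes "weak_deriv u g" "weak_deriv v h" "L2 u" "L2 v" "L2 g" "L2 h"
  shows "weak_deriv (\<lambda>x. c * u x + d * v x) (\<lambda>x. c * g x + d * h x)"
  unfolding weak_deriv_def
proof (intro conjI allI impI)
  show "(\<lambda>x. c * g x + d * h x) \<in> borel_measurable lborel"
    using assms by (auto simp: L2_def)
  fix \<phi> assume \<phi>: "test_fun \<phi>"
  have "integrable lborel (\<lambda>x. u x * deriv \<phi> x)" "integrable lborel (\<lambda>x. v x * deriv \<phi> x)"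
       "integrable lborel (\<lambda>x. g x * \<phi> x)" "integrable lborel (\<lambda>x. h x * \<phi> x)"
    using L2_mult_integrable test_fun_L2[OF \<phi>] assms by auto
  moreover have "(\<integral>x. u x * deriv \<phi> x \<partial>lborel) = - (\<integral>x. g x * \<phi> x \<partial>lborel)"
                "(\<integral>x. v x * deriv \<phi> x \<partial>lborel) = - (\<integral>x. h x * \<phi> x \<partial>lborel)"
    using assms(1,2) \<phi> by (simp_all add: weak_deriv_def)
  ultimately show "(\<integral>x. (c * u x + d * v x) * deriv \<phi> x \<partial>lborel)
      = - (\<integral>x. (c * g x + d * h x) * \<phi> x \<partial>lborel)"
    by (simp add: algebra_simps)
qed

lemma integral_deriv_compact_support_eq_0:
  fixes h h' :: "real \<Rightarrow> real"
  assumes h: "\<And>x. (h has_real_derivative h' x) (at x)" and h': "continuous_on UNIV h'"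
    and supp: "\<And>x. R < \<bar>x\<bar> \<Longrightarrow> h x = 0" "\<And>x. R < \<bar>x\<bar> \<Longrightarrow> h' x = 0"
  shows "(\<integral>x. h' x \<partial>lborel) = 0"
proof -
  let ?S = "{-(\<bar>R\<bar>+1)..\<bar>R\<bar>+1}"
  have "(\<integral>x. indicator ?S x *\<^sub>R h' x \<partial>lborel) = h (\<bar>R\<bar>+1) - h (-(\<bar>R\<bar>+1))"
  proof (rule integral_FTC_atLeastAtMost)
    show "(h has_vector_derivative h' x) (at x within ?S)" for x
      using h[of x] by (simp add: has_real_derivative_iff_has_vector_derivative[symmetric]
          has_field_derivative_at_within)
  qed (auto intro: continuous_on_subset[OF h'])
  also have "(\<lambda>x. indicator ?S x *\<^sub>R h' x) = h'"
  proof
    fix x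
    have "R < \<bar>x\<bar>" if "x \<notin> ?S" using that by auto
    then show "indicator ?S x *\<^sub>R h' x = h' x" using supp(2)[of x] by (auto simp: indicator_def)
  qed
  finally show ?thesis using supp(1) by simp
qed

lemma weak_deriv_classical:
  fixes f f' :: "real \<Rightarrow> real"
  assumes f: "\<And>x. (f has_real_derivative f' x) (at x)" and f': "continuous_on UNIV f'"
  shows "weak_deriv f f'"
  unfolding weak_deriv_def
proof (intro conjI allI impI)
  show "f' \<in> borel_measurable lborel" using borel_measurable_continuous_onI[OF f'] by simp
  fix \<phi> assume \<phi>: "test_fun \<phi>"
  obtain R where "R > 0" and z: "\<And>x. R < \<bar>x\<bar> \<Longrightarrow> \<phi> x = 0"
    and z': "\<And>x. R < \<bar>x\<bar> \<Longrightarrow> deriv \<phi> x = 0"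
    using test_fun_support[OF \<phi>] by blast
  have fc: "continuous_on UNIV f"
    using f by (intro continuous_at_imp_continuous_on ballI DERIV_isCont) auto
  have \<phi>c: "continuous_on UNIV \<phi>" "continuous_on UNIV (deriv \<phi>)"
    using \<phi> test_fun_continuous by (auto simp: test_fun_def)
  have i: "integrable lborel (\<lambda>x. f x * deriv \<phi> x)" "integrable lborel (\<lambda>x. f' x * \<phi> x)"
    by (auto intro!: integrable_continuous_compact_support[where R=R] continuous_intros
        fc f' \<phi>c simp: z z')
  have "(\<integral>x. f' x * \<phi> x + f x * deriv \<phi> x \<partial>lborel) = 0"
  proof (rule integral_deriv_compact_support_eq_0[where h="\<lambda>x. f x * \<phi> x" and R=R])
    show "((\<lambda>x. f x * \<phi> x) has_real_derivative f' x * \<phi> x + f x * deriv \<phi> x) (at x)" for x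
      using DERIV_mult[OF f test_fun_DERIV[OF \<phi>]] by (simp add: mult.commute)
    show "continuous_on UNIV (\<lambda>x. f' x * \<phi> x + f x * deriv \<phi> x)"
      by (intro continuous_intros f' fc \<phi>c)
  qed (simp_all add: z z')
  then show "(\<integral>x. f x * deriv \<phi> x \<partial>lborel) = - (\<integral>x. f' x * \<phi> x \<partial>lborel)"
    using i by simp
qed

lemma weak_deriv_L2_limit:
  assumes v: "\<And>n. weak_deriv (v n) (g n)" "\<And>n. L2 (v n)" "\<And>n. L2 (g n)"
    and lim: "L2 u" "L2 g0" "(\<lambda>n. \<integral>x. (v n x - u x)\<^sup>2 \<partial>lborel) \<longlonglongrightarrow> 0"
      "(\<lambda>n. \<integral>x. (g n x - g0 x)\<^sup>2 \<partial>lborel) \<longlonglongrightarrow> 0"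
  shows "weak_deriv u g0"
  unfolding weak_deriv_def
proof (intro conjI allI impI)
  show "g0 \<in> borel_measurable lborel" using lim(2) by (simp add: L2_def)
  fix \<phi> assume \<phi>: "test_fun \<phi>"
  have "(\<lambda>n. \<integral>x. v n x * deriv \<phi> x \<partial>lborel) \<longlonglongrightarrow> (\<integral>x. u x * deriv \<phi> x \<partial>lborel)"
    by (rule L2_inner_tendsto[OF v(2) lim(1) test_fun_L2(2)[OF \<phi>] lim(3)])
  moreover have "(\<lambda>n. \<integral>x. v n x * deriv \<phi> x \<partial>lborel) \<longlonglongrightarrow> - (\<integral>x. g0 x * \<phi> x \<partial>lborel)"
    using tendsto_minus[OF L2_inner_tendsto[OF v(3) lim(2) test_fun_L2(1)[OF \<phi>] lim(4)]]
      v(1) \<phi> by (simp add: weak_deriv_def)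
  ultimately show "(\<integral>x. u x * deriv \<phi> x \<partial>lborel) = - (\<integral>x. g0 x * \<phi> x \<partial>lborel)"
    by (rule LIMSEQ_unique)
qed

section \<open>A smooth step, mollifiers and ramps\<close>

definition clamp :: "real \<Rightarrow> real" where "clamp t = max 0 (min 1 t)"

definition smooth_step :: "real \<Rightarrow> real" where
  "smooth_step t = 3 * (clamp t)\<^sup>2 - 2 * (clamp t) ^ 3"

definition smooth_step_deriv :: "real \<Rightarrow> real" where
  "smooth_step_deriv t = 6 * clamp t * (1 - clamp t)"

lemma smooth_step_eq_0: "t \<le> 0 \<Longrightarrow> smooth_step t = 0"
  and smooth_step_eq_1: "1 \<le> t \<Longrightarrow> smooth_step t = 1"
  and smooth_step_deriv_eq_0: "t \<le> 0 \<or> 1 \<le> t \<Longrightarrow> smooth_step_deriv t = 0"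
  and smooth_step_deriv_nonneg: "0 \<le> smooth_step_deriv t"
  by (auto simp: smooth_step_def smooth_step_deriv_def clamp_def)

lemma smooth_step_deriv_continuous: "continuous_on UNIV smooth_step_deriv"
  unfolding smooth_step_deriv_def clamp_def by (intro continuous_intros)

lemma smooth_step_bounds: "0 \<le> smooth_step t" "smooth_step t \<le> 1"
proof -
  define c where "c = clamp t"
  have c: "0 \<le> c" "c \<le> 1" by (auto simp: c_def clamp_def)
  have "smooth_step t = c\<^sup>2 * (3 - 2 * c)"
    by (simp add: smooth_step_def c_def power2_eq_square power3_eq_cube algebra_simps)
  moreover have "1 - c\<^sup>2 * (3 - 2 * c) = (1 - c)\<^sup>2 * (1 + 2 * c)"
    by (simp add: power2_eq_square algebra_simps)
  moreover have "0 \<le> (1 - c)\<^sup>2 * (1 + 2 * c)" "0 \<le> c\<^sup>2 * (3 - 2 * c)" using c by simp_all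
  ultimately show "0 \<le> smooth_step t" "smooth_step t \<le> 1" by linarith+
qed

lemma smooth_step_reflect: "smooth_step (1 - t) = 1 - smooth_step t"
proof -
  have "clamp (1 - t) = 1 - clamp t" by (simp add: clamp_def)
  moreover have "3 * (1 - c)\<^sup>2 - 2 * (1 - c) ^ 3 = 1 - (3 * c\<^sup>2 - 2 * c ^ 3)" for c :: real
    by algebra
  ultimately show ?thesis unfolding smooth_step_def by simp
qed

lemma smooth_step_quadratic_at_0: "\<bar>smooth_step h\<bar> \<le> 3 * h\<^sup>2"
proof -
  have "\<bar>smooth_step h\<bar> = 3 * (clamp h)\<^sup>2 - 2 * (clamp h) ^ 3"
    using smooth_step_bounds(1)[of h] by (simp add: smooth_step_def)
  moreover have "(clamp h)\<^sup>2 \<le> h\<^sup>2" by (cases "h \<le> 0") (auto simp: clamp_def intro!: power_mono)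
  moreover have "0 \<le> (clamp h) ^ 3" by (simp add: clamp_def)
  ultimately show ?thesis by linarith
qed

lemma DERIV_zero_if_quadratic_bound:
  fixes f :: "real \<Rightarrow> real"
  assumes "\<And>h. \<bar>f (x + h) - f x\<bar> \<le> C * h\<^sup>2"
  shows "(f has_real_derivative 0) (at x)"
proof -
  have "((\<lambda>h. (f (x + h) - f x) / h) \<longlongrightarrow> 0) (at 0)"
  proof (rule Lim_null_comparison)
    show "\<forall>\<^sub>F h in at 0. norm ((f (x + h) - f x) / h) \<le> C * \<bar>h\<bar>"
    proof (rule eventually_at_filter[THEN iffD2], rule always_eventually, intro allI impI)
      fix h :: real assume "h \<noteq> 0"
      have "norm ((f (x + h) - f x) / h) = \<bar>f (x + h) - f x\<bar> / \<bar>h\<bar>" by (simp add: abs_divide)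
      also have "\<dots> \<le> C * h\<^sup>2 / \<bar>h\<bar>" using assms[of h] by (intro divide_right_mono) auto
      also have "C * h\<^sup>2 / \<bar>h\<bar> = C * \<bar>h\<bar>"
        using \<open>h \<noteq> 0\<close> by (cases "h < 0") (auto simp: power2_eq_square field_simps)
      finally show "norm ((f (x + h) - f x) / h) \<le> C * \<bar>h\<bar>" .
    qed
    show "((\<lambda>h. C * \<bar>h\<bar>) \<longlongrightarrow> 0) (at (0::real))"
      by (intro tendsto_mult_right_zero tendsto_rabs_zero tendsto_ident_at)
  qed
  then show ?thesis by (simp add: DERIV_def)
qed

lemma smooth_step_DERIV: "(smooth_step has_real_derivative smooth_step_deriv t) (at t)"
proof -
  consider "t < 0" | "t = 0" | "0 < t" "t < 1" | "t = 1" | "1 < t" by linarith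
  then show ?thesis
  proof cases
    case 1
    have "(smooth_step has_real_derivative 0) (at t)"
      by (rule has_field_derivative_transform_within_open[where f="\<lambda>_. 0" and S="{..<0}"])
         (use 1 in \<open>auto simp: smooth_step_eq_0\<close>)
    then show ?thesis using 1 by (simp add: smooth_step_deriv_eq_0)
  next
    case 2
    have "(smooth_step has_real_derivative 0) (at 0)"
      by (rule DERIV_zero_if_quadratic_bound[where C=3])
         (simp add: smooth_step_eq_0 smooth_step_quadratic_at_0)
    then show ?thesis using 2 by (simp add: smooth_step_deriv_eq_0)
  next
    case 3
    have "((\<lambda>s. 3 * s\<^sup>2 - 2 * s ^ 3) has_real_derivative 6 * t * (1 - t)) (at t)"
      by (auto intro!: derivative_eq_intros simp: power2_eq_square algebra_simps)
    then have "(smooth_step has_real_derivative 6 * t * (1 - t)) (at t)"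
      by (rule has_field_derivative_transform_within_open[where S="{0<..<1}"])
         (use 3 in \<open>auto simp: smooth_step_def clamp_def\<close>)
    then show ?thesis using 3 by (simp add: smooth_step_deriv_def clamp_def)
  next
    case 4
    have "\<bar>smooth_step (1 + h) - smooth_step 1\<bar> \<le> 3 * h\<^sup>2" for h
      using smooth_step_reflect[of "-h"] smooth_step_quadratic_at_0[of "-h"]
      by (simp add: smooth_step_eq_1)
    then have "(smooth_step has_real_derivative 0) (at 1)"
      by (rule DERIV_zero_if_quadratic_bound)
    then show ?thesis using 4 by (simp add: smooth_step_deriv_eq_0)
  next
    case 5
    have "(smooth_step has_real_derivative 0) (at t)"
      by (rule has_field_derivative_transform_within_open[where f="\<lambda>_. 1" and S="{1<..}"])
         (use 5 in \<open>auto simp: smooth_step_eq_1\<close>)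
    then show ?thesis using 5 by (simp add: smooth_step_deriv_eq_0)
  qed
qed

text \<open>For \<open>y \<le> x\<close>, \<open>ramp y x e\<close> is a \<open>C\<^sup>1\<close> approximation of the indicator of \<open>{y<..x}\<close>
  whose derivative is the difference of two mollifiers of width \<open>e\<close>.\<close>

definition ramp :: "real \<Rightarrow> real \<Rightarrow> real \<Rightarrow> real \<Rightarrow> real" where
  "ramp y x e t = smooth_step ((t - y) / e) - smooth_step ((t - x) / e)"

definition mollifier :: "real \<Rightarrow> real \<Rightarrow> real \<Rightarrow> real" where
  "mollifier z e t = smooth_step_deriv ((t - z) / e) / e"

lemma smooth_step_scaled_DERIV:
  "((\<lambda>t. smooth_step ((t - z) / e)) has_real_derivative mollifier z e t) (at t)"
proof -
  have "((\<lambda>t. (t - z) / e) has_real_derivative 1 / e) (at t)"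
    using DERIV_cdivide[OF DERIV_diff[OF DERIV_ident DERIV_const], of z e] by simp
  from DERIV_chain[OF smooth_step_DERIV this] show ?thesis by (simp add: o_def mollifier_def)
qed

lemma ramp_DERIV: "(ramp y x e has_real_derivative mollifier y e t - mollifier x e t) (at t)"
  unfolding ramp_def by (intro DERIV_diff smooth_step_scaled_DERIV)

lemma deriv_ramp: "deriv (ramp y x e) = (\<lambda>t. mollifier y e t - mollifier x e t)"
  using ramp_DERIV DERIV_imp_deriv by blast

lemma mollifier_continuous: "continuous_on UNIV (mollifier z e)"
proof (cases "e = 0")
  case False
  then show ?thesis unfolding mollifier_def
    by (intro continuous_intros continuous_on_compose2[OF smooth_step_deriv_continuous]) auto
qed (simp add: mollifier_def)

lemma mollifier_nonneg: "0 < e \<Longrightarrow> 0 \<le> mollifier z e t"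
  by (simp add: mollifier_def smooth_step_deriv_nonneg)

lemma mollifier_eq_0: "0 < e \<Longrightarrow> t \<notin> {z..z+e} \<Longrightarrow> mollifier z e t = 0"
  by (auto simp: mollifier_def smooth_step_deriv_eq_0 divide_nonpos_pos le_divide_eq not_le)

lemma mollifier_eq_0_outside: "0 < e \<Longrightarrow> \<bar>z\<bar> + e < \<bar>t\<bar> \<Longrightarrow> mollifier z e t = 0"
  by (rule mollifier_eq_0) auto

lemma mollifier_integral: assumes "0 < e" shows "(\<integral>t. mollifier z e t \<partial>lborel) = 1"
proof -
  have "(\<integral>t. indicator {z..z+e} t *\<^sub>R mollifier z e t \<partial>lborel)
      = smooth_step ((z + e - z) / e) - smooth_step ((z - z) / e)"
  proof (rule integral_FTC_atLeastAtMost)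
    show "continuous_on {z..z+e} (mollifier z e)"
      using mollifier_continuous continuous_on_subset by blast
    show "((\<lambda>t. smooth_step ((t - z) / e)) has_vector_derivative mollifier z e t) (at t within {z..z+e})"
      for t using smooth_step_scaled_DERIV[of z e t]
      by (simp add: has_real_derivative_iff_has_vector_derivative[symmetric] has_field_derivative_at_within)
  qed (use assms in simp)
  also have "(\<lambda>t. indicator {z..z+e} t *\<^sub>R mollifier z e t) = mollifier z e"
    using mollifier_eq_0[OF assms] by (auto simp: indicator_def fun_eq_iff)
  finally show ?thesis using assms by (simp add: smooth_step_eq_0 smooth_step_eq_1)
qed

lemma integrable_mult_mollifier:
  assumes "0 < e" "continuous_on UNIV u"
  shows "integrable lborel (\<lambda>t. u t * mollifier z e t)"
  by (rule integrable_continuous_compact_support[where R="\<bar>z\<bar> + e"])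
     (auto intro!: continuous_intros assms(2) mollifier_continuous
           simp: mollifier_eq_0_outside[OF assms(1)])

lemma mollifier_approx_identity:
  assumes u: "continuous_on UNIV u" and e: "\<And>n. 0 < e n" "e \<longlonglongrightarrow> 0"
  shows "(\<lambda>n. \<integral>t. u t * mollifier z (e n) t \<partial>lborel) \<longlonglongrightarrow> u z"
proof (rule LIMSEQ_I)
  fix r :: real assume "0 < r"
  obtain d where "d > 0" and d: "\<And>t. dist t z < d \<Longrightarrow> dist (u t) (u z) < r / 2"
    using u \<open>0 < r\<close> unfolding continuous_on_iff by (metis UNIV_I half_gt_zero)
  obtain N where N: "\<And>n. n \<ge> N \<Longrightarrow> e n < d"
    using e(1) \<open>d > 0\<close> LIMSEQ_D[OF e(2)] by (metis abs_of_pos diff_zero real_norm_def)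
  have bound: "norm ((\<integral>t. u t * mollifier z (e n) t \<partial>lborel) - u z) \<le> r / 2" if "n \<ge> N" for n
  proof -
    note i = integrable_mult_mollifier[OF e(1) u] integrable_mult_mollifier[OF e(1), of "\<lambda>_. 1"]
    have "(\<integral>t. u t * mollifier z (e n) t \<partial>lborel) - u z = (\<integral>t. (u t - u z) * mollifier z (e n) t \<partial>lborel)"
      using mollifier_integral[OF e(1)] i by (simp add: left_diff_distrib)
    also have "norm \<dots> \<le> (\<integral>t. r / 2 * mollifier z (e n) t \<partial>lborel)"
    proof (rule Bochner_Integration.integral_norm_bound_integral)
      show "integrable lborel (\<lambda>t. (u t - u z) * mollifier z (e n) t)"
        using i by (simp add: left_diff_distrib)
      show "integrable lborel (\<lambda>t. r / 2 * mollifier z (e n) t)" using i by simp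
      fix t
      show "norm ((u t - u z) * mollifier z (e n) t) \<le> r / 2 * mollifier z (e n) t"
      proof (cases "t \<in> {z..z + e n}")
        case True
        then have "\<bar>u t - u z\<bar> * mollifier z (e n) t \<le> r / 2 * mollifier z (e n) t"
          using d[of t] N[OF \<open>n \<ge> N\<close>] mollifier_nonneg[OF e(1)]
          by (intro mult_right_mono) (auto simp: dist_real_def)
        then show ?thesis using mollifier_nonneg[OF e(1), of z n t] by (simp add: abs_mult)
      qed (simp add: mollifier_eq_0[OF e(1)])
    qed
    finally show ?thesis using mollifier_integral[OF e(1)] by simp
  qed
  show "\<exists>N. \<forall>n\<ge>N. norm ((\<integral>t. u t * mollifier z (e n) t \<partial>lborel) - u z) < r"
  proof (intro exI allI impI)
    fix n assume "N \<le> n"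
    with bound \<open>0 < r\<close> show "norm ((\<integral>t. u t * mollifier z (e n) t \<partial>lborel) - u z) < r"
      by fastforce
  qed
qed

lemma ramp_bounds: "\<bar>ramp y x e t\<bar> \<le> 1"
  using smooth_step_bounds[of "(t - y) / e"] smooth_step_bounds[of "(t - x) / e"]
  unfolding ramp_def by linarith

lemma ramp_eq_0:
  assumes "0 < e" "t \<le> min y x \<or> max y x + e \<le> t" shows "ramp y x e t = 0"
  using assms by (auto simp: ramp_def smooth_step_eq_0 smooth_step_eq_1 divide_nonpos_pos le_divide_eq)

lemma ramp_test_fun: assumes "0 < e" shows "test_fun (ramp y x e)"
  unfolding test_fun_def
proof (intro conjI)
  show "ramp y x e differentiable_on UNIV"
    unfolding differentiable_on_def real_differentiable_def using ramp_DERIV by blast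
  show "continuous_on UNIV (deriv (ramp y x e))"
    by (simp add: deriv_ramp continuous_on_diff mollifier_continuous)
  show "\<exists>R. \<forall>t. R < \<bar>t\<bar> \<longrightarrow> ramp y x e t = 0"
    using assms by (intro exI[of _ "\<bar>y\<bar> + \<bar>x\<bar> + e"]) (auto intro!: ramp_eq_0)
qed

lemma ramp_tendsto_indicator:
  assumes "y \<le> x"
  shows "(\<lambda>n. ramp y x (1 / Suc n) t) \<longlonglongrightarrow> indicator {y<..x} t"
proof (rule Lim_transform_eventually[OF tendsto_const])
  have small: "\<forall>\<^sub>F n in sequentially. 1 / real (Suc n) < d" if "0 < d" for d
    using LIMSEQ_D[OF LIMSEQ_inverse_real_of_nat that]
    by (auto simp: eventually_sequentially inverse_eq_divide)
  consider "t \<le> y" | "y < t" "t \<le> x" | "x < t" by linarith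
  then show "\<forall>\<^sub>F n in sequentially. indicator {y<..x} t = ramp y x (1 / Suc n) t"
  proof cases
    case 1
    then show ?thesis using assms by (auto intro!: always_eventually simp: ramp_eq_0)
  next
    case 2
    have "\<forall>\<^sub>F n in sequentially. 1 / real (Suc n) < t - y" using 2 by (intro small) simp
    then show ?thesis
    proof eventually_elim
      case (elim n)
      then have "1 \<le> (t - y) * (1 + real n)" by (simp add: field_simps)
      moreover have "(t - x) * (1 + real n) \<le> 0" using 2 by (simp add: mult_nonpos_nonneg)
      ultimately show ?case using 2 by (simp add: ramp_def smooth_step_eq_0 smooth_step_eq_1)
    qed
  next
    case 3
    have "\<forall>\<^sub>F n in sequentially. 1 / real (Suc n) < t - x" using 3 by (intro small) simp
    then show ?thesis by eventually_elim (use 3 assms in \<open>simp add: ramp_eq_0\<close>)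
  qed
qed

lemma integral_mult_ramp_tendsto:
  assumes "L2 g" "y \<le> x"
  shows "(\<lambda>n. \<integral>t. g t * ramp y x (1 / Suc n) t \<partial>lborel) \<longlonglongrightarrow> (\<integral>t. g t * indicator {y<..x} t \<partial>lborel)"
proof (rule integral_dominated_convergence[where w="\<lambda>t. \<bar>g t\<bar> * indicator {y..x+1} t"])
  have [measurable]: "g \<in> borel_measurable lborel" using assms by (simp add: L2_def)
  show "(\<lambda>t. g t * indicator {y<..x} t) \<in> borel_measurable lborel" by measurable
  show "(\<lambda>t. g t * ramp y x (1 / Suc n) t) \<in> borel_measurable lborel" for n
    using ramp_test_fun[THEN test_fun_continuous, THEN borel_measurable_continuous_onI,
        of "1 / Suc n" y x] by simp
  show "integrable lborel (\<lambda>t. \<bar>g t\<bar> * indicator {y..x+1} t)"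
    using L2_mult_integrable[OF L2_abs[OF assms(1)] L2_indicator_interval(2)] .
  show "AE t in lborel. (\<lambda>n. g t * ramp y x (1 / Suc n) t) \<longlonglongrightarrow> g t * indicator {y<..x} t"
    by (intro AE_I2 tendsto_mult tendsto_const ramp_tendsto_indicator assms(2))
  show "AE t in lborel. norm (g t * ramp y x (1 / Suc n) t) \<le> \<bar>g t\<bar> * indicator {y..x+1} t" for n
  proof (rule AE_I2)
    fix t
    have "ramp y x (1 / Suc n) t = 0" if "t \<notin> {y..x+1}"
    proof (rule ramp_eq_0)
      have "1 / real (Suc n) \<le> 1" by simp
      then show "t \<le> min y x \<or> max y x + 1 / real (Suc n) \<le> t"
        using that assms(2) by (smt (verit) atLeastAtMost_iff)
    qed simp
    then show "norm (g t * ramp y x (1 / Suc n) t) \<le> \<bar>g t\<bar> * indicator {y..x+1} t"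
      using ramp_bounds[of y x "1 / Suc n" t]
      by (cases "t \<in> {y..x+1}") (auto simp: abs_mult mult_left_le)
  qed
qed

section \<open>Weak derivatives are integrated derivatives\<close>

theorem weak_deriv_FTC:
  assumes "weak_deriv u g" "continuous_on UNIV u" "L2 g" "y \<le> x"
  shows "u x - u y = (\<integral>t. g t * indicator {y<..x} t \<partial>lborel)"
proof -
  let ?e = "\<lambda>n. 1 / real (Suc n)"
  have e: "?e \<longlonglongrightarrow> 0" using LIMSEQ_inverse_real_of_nat by (simp add: inverse_eq_divide)
  have "(\<integral>t. u t * deriv (ramp y x (?e n)) t \<partial>lborel) = - (\<integral>t. g t * ramp y x (?e n) t \<partial>lborel)"
    for n using assms(1) ramp_test_fun[of "?e n" y x] unfolding weak_deriv_def by simp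
  then have "(\<integral>t. u t * (mollifier y (?e n) t - mollifier x (?e n) t) \<partial>lborel)
      = - (\<integral>t. g t * ramp y x (?e n) t \<partial>lborel)" for n
    by (simp add: deriv_ramp)
  moreover have "(\<integral>t. u t * (mollifier y (?e n) t - mollifier x (?e n) t) \<partial>lborel)
      = (\<integral>t. u t * mollifier y (?e n) t \<partial>lborel) - (\<integral>t. u t * mollifier x (?e n) t \<partial>lborel)" for n
    using integrable_mult_mollifier[OF _ assms(2), of "?e n"] by (simp add: right_diff_distrib)
  ultimately have "(\<lambda>n. - (\<integral>t. g t * ramp y x (?e n) t \<partial>lborel)) \<longlonglongrightarrow> u y - u x"
    using tendsto_diff[OF mollifier_approx_identity mollifier_approx_identity, OF assms(2) _ e
        assms(2) _ e] by simp
  with tendsto_minus[OF integral_mult_ramp_tendsto[OF assms(3,4)]] show ?thesis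
    using LIMSEQ_unique by fastforce
qed

lemma emeasure_density_eq_integral:
  fixes f :: "real \<Rightarrow> real"
  assumes "integrable lborel f" "\<And>t. 0 \<le> f t" "A \<in> sets borel"
  shows "emeasure (density lborel f) A = ennreal (\<integral>t. f t * indicator A t \<partial>lborel)"
proof -
  have "emeasure (density lborel f) A = (\<integral>\<^sup>+ t. ennreal (f t * indicator A t) \<partial>lborel)"
    using assms by (subst emeasure_density) (auto intro!: nn_integral_cong simp: indicator_def)
  also have "\<dots> = ennreal (\<integral>t. f t * indicator A t \<partial>lborel)"
    using assms by (intro nn_integral_eq_integral integrable_real_mult_indicator) auto
  finally show ?thesis .
qed

lemma AE_zero_if_halfline_integrals_zero:
  fixes f :: "real \<Rightarrow> real"
  assumes f: "integrable lborel f" and I0: "\<And>x. (\<integral>t. f t * indicator {x<..} t \<partial>lborel) = 0"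
  shows "AE t in lborel. f t = 0"
proof -
  define fp fm where "fp t = max 0 (f t)" and "fm t = max 0 (- f t)" for t
  have i: "integrable lborel fp" "integrable lborel fm" unfolding fp_def fm_def
    using Bochner_Integration.integrable_max[OF integrable_zero] f by auto
  have nn: "0 \<le> fp t" "0 \<le> fm t" for t by (auto simp: fp_def fm_def)
  have split: "(\<integral>t. fp t * indicator A t \<partial>lborel) - (\<integral>t. fm t * indicator A t \<partial>lborel)
      = (\<integral>t. f t * indicator A t \<partial>lborel)" if "A \<in> sets borel" for A
  proof -
    have "(\<lambda>t. f t * indicator A t) = (\<lambda>t. fp t * indicator A t - fm t * indicator A t)"
      by (auto simp: fp_def fm_def indicator_def max_def)
    then show ?thesis using i that by (simp add: integrable_real_mult_indicator)
  qed
  have "density lborel fp = density lborel fm"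
  proof (rule measure_eqI_lessThan)
    fix x :: real
    show "emeasure (density lborel fp) {x<..} < \<infinity>"
      using emeasure_density_eq_integral[OF i(1) nn(1)] by simp
    show "emeasure (density lborel fp) {x<..} = emeasure (density lborel fm) {x<..}"
      using emeasure_density_eq_integral[OF i(1) nn(1)] emeasure_density_eq_integral[OF i(2) nn(2)]
        split[of "{x<..}"] I0[of x] by simp
  qed simp_all
  then have "(\<integral>t \<in> A. fp t \<partial>lborel) = (\<integral>t \<in> A. fm t \<partial>lborel)" if "A \<in> sets lborel" for A
    using emeasure_density_eq_integral[OF i(1) nn(1), of A] emeasure_density_eq_integral[OF i(2) nn(2), of A]
      that nn by (simp add: set_lebesgue_integral_def mult.commute integral_nonneg_AE)
  then have "AE t in lborel. fp t = fm t" by (rule density_unique_real[OF i])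
  then show ?thesis by eventually_elim (auto simp: fp_def fm_def max_def split: if_splits)
qed

lemma AE_zero_if_interval_integrals_zero:
  assumes h: "L2 h" and I0: "\<And>y x. y \<le> x \<Longrightarrow> (\<integral>t. h t * indicator {y<..x} t \<partial>lborel) = 0"
  shows "AE t in lborel. h t = 0"
proof -
  have "AE t in lborel. h t * indicator {- real N<..real N} t = 0" for N :: nat
  proof (rule AE_zero_if_halfline_integrals_zero)
    show "integrable lborel (\<lambda>t. h t * indicator {- real N<..real N} t)"
      using L2_mult_integrable[OF h L2_indicator_interval(1)] .
    fix x :: real
    have "(\<lambda>t. h t * indicator {- real N<..real N} t * indicator {x<..} t)
        = (\<lambda>t. h t * indicator {min (real N) (max x (- real N))<..real N} t)"
      by (auto simp: indicator_def fun_eq_iff)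
    then show "(\<integral>t. h t * indicator {- real N<..real N} t * indicator {x<..} t \<partial>lborel) = 0"
      using I0 by simp
  qed
  then have "AE t in lborel. \<forall>N::nat. h t * indicator {- real N<..real N} t = 0"
    by (subst AE_all_countable) blast
  then show ?thesis
  proof eventually_elim
    case (elim t)
    obtain N :: nat where "\<bar>t\<bar> < real N" using reals_Archimedean2 by blast
    then show "h t = 0" using elim[rule_format, of N] by (auto simp: indicator_def)
  qed
qed

theorem weak_deriv_unique:
  assumes "weak_deriv u g1" "weak_deriv u g2" "continuous_on UNIV u" "L2 g1" "L2 g2"
  shows "AE t in lborel. g1 t = g2 t"
proof -
  have "AE t in lborel. g1 t - g2 t = 0"
  proof (rule AE_zero_if_interval_integrals_zero)
    show "L2 (\<lambda>t. g1 t - g2 t)" using assms by (intro L2_diff)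
    fix y x :: real assume "y \<le> x"
    have "(\<integral>t. (g1 t - g2 t) * indicator {y<..x} t \<partial>lborel)
        = (\<integral>t. g1 t * indicator {y<..x} t \<partial>lborel) - (\<integral>t. g2 t * indicator {y<..x} t \<partial>lborel)"
      using L2_mult_integrable[OF assms(4) L2_indicator_interval(1)]
        L2_mult_integrable[OF assms(5) L2_indicator_interval(1)]
      by (simp add: left_diff_distrib)
    then show "(\<integral>t. (g1 t - g2 t) * indicator {y<..x} t \<partial>lborel) = 0"
      using weak_deriv_FTC[OF assms(1,3,4) \<open>y \<le> x\<close>] weak_deriv_FTC[OF assms(2,3,5) \<open>y \<le> x\<close>]
      by simp
  qed
  then show ?thesis by auto
qed

section \<open>The space \<open>H\<^sup>1\<close> and the constraint set\<close>

lemma H1_D: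
  assumes "u \<in> H1"
  shows "continuous_on UNIV u" "L2 u" "weak_deriv u (H1_deriv u)" "L2 (H1_deriv u)"
proof -
  have "\<exists>g. weak_deriv u g \<and> integrable lborel (\<lambda>x. (g x)\<^sup>2)" using assms by (simp add: H1_def)
  then have "weak_deriv u (H1_deriv u) \<and> integrable lborel (\<lambda>x. (H1_deriv u x)\<^sup>2)"
    unfolding H1_deriv_def by (rule someI_ex)
  then show "weak_deriv u (H1_deriv u)" "L2 (H1_deriv u)" by (auto simp: L2_def weak_deriv_def)
  show "continuous_on UNIV u" "L2 u" using assms by (auto simp: H1_def L2_def)
qed

lemma H1I: "continuous_on UNIV u \<Longrightarrow> L2 u \<Longrightarrow> weak_deriv u g \<Longrightarrow> L2 g \<Longrightarrow> u \<in> H1"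
  by (auto simp: H1_def L2_def)

lemma H1_deriv_AE_eq:
  assumes "u \<in> H1" "weak_deriv u g" "L2 g"
  shows "AE x in lborel. H1_deriv u x = g x"
  using weak_deriv_unique[OF H1_D(3)[OF assms(1)] assms(2) H1_D(1)[OF assms(1)]
      H1_D(4)[OF assms(1)] assms(3)] .

lemma H1_linear_combination:
  assumes "u \<in> H1" "v \<in> H1"
  shows "(\<lambda>x. c * u x + d * v x) \<in> H1"
    and "AE x in lborel. H1_deriv (\<lambda>x. c * u x + d * v x) x = c * H1_deriv u x + d * H1_deriv v x"
proof -
  note u = H1_D[OF assms(1)] and v = H1_D[OF assms(2)]
  have wd: "weak_deriv (\<lambda>x. c * u x + d * v x) (\<lambda>x. c * H1_deriv u x + d * H1_deriv v x)"
    by (rule weak_deriv_linear_combination) (use u v in auto)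
  have L: "L2 (\<lambda>x. c * H1_deriv u x + d * H1_deriv v x)" using u v by (intro L2_add L2_cmult)
  show H: "(\<lambda>x. c * u x + d * v x) \<in> H1"
    by (rule H1I[OF _ _ wd L]) (use u v in \<open>auto intro!: continuous_intros L2_add L2_cmult\<close>)
  show "AE x in lborel. H1_deriv (\<lambda>x. c * u x + d * v x) x = c * H1_deriv u x + d * H1_deriv v x"
    by (rule H1_deriv_AE_eq[OF H wd L])
qed

lemma H1_limit:
  assumes v: "\<And>n. v n \<in> H1" and pw: "\<And>x. (\<lambda>n. v n x) \<longlonglongrightarrow> u x" and u: "continuous_on UNIV u"
    and cv: "\<And>e. e > 0 \<Longrightarrow> \<exists>N. \<forall>n\<ge>N. \<forall>m\<ge>N. (\<integral>x. (v n x - v m x)\<^sup>2 \<partial>lborel) < e"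
    and cg: "\<And>e. e > 0 \<Longrightarrow> \<exists>N. \<forall>n\<ge>N. \<forall>m\<ge>N.
               (\<integral>x. (H1_deriv (v n) x - H1_deriv (v m) x)\<^sup>2 \<partial>lborel) < e"
  shows "u \<in> H1" "(\<lambda>n. \<integral>x. (v n x - u x)\<^sup>2 \<partial>lborel) \<longlonglongrightarrow> 0"
    "(\<lambda>n. \<integral>x. (H1_deriv (v n) x - H1_deriv u x)\<^sup>2 \<partial>lborel) \<longlonglongrightarrow> 0"
proof -
  note vD = H1_D[OF v]
  have um: "u \<in> borel_measurable lborel" using borel_measurable_continuous_onI[OF u] by simp
  obtain h r where h: "L2 h" and r: "strict_mono r"
    and rconv: "AE x in lborel. (\<lambda>k. v (r k) x) \<longlonglongrightarrow> h x"
    and vh: "(\<lambda>n. \<integral>x. (v n x - h x)\<^sup>2 \<partial>lborel) \<longlonglongrightarrow> 0"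
    by (rule L2_complete[OF vD(2) cv])
  have uh: "AE x in lborel. u x = h x" using rconv
  proof eventually_elim
    case (elim x)
    then show ?case using LIMSEQ_subseq_LIMSEQ[OF pw r, of x] LIMSEQ_unique by (auto simp: o_def)
  qed
  have "integrable lborel (\<lambda>x. (u x)\<^sup>2) \<longleftrightarrow> integrable lborel (\<lambda>x. (h x)\<^sup>2)"
    using uh um h by (intro integrable_cong_AE) (auto simp: L2_def)
  then have uL2: "L2 u" using h um by (simp add: L2_def)
  have "(\<integral>x. (v n x - u x)\<^sup>2 \<partial>lborel) = (\<integral>x. (v n x - h x)\<^sup>2 \<partial>lborel)" for n
    using uh um h vD(2)[of n] by (intro integral_cong_AE) (auto simp: L2_def)
  with vh show vu: "(\<lambda>n. \<integral>x. (v n x - u x)\<^sup>2 \<partial>lborel) \<longlonglongrightarrow> 0" by simp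
  obtain g where g: "L2 g" and Gg: "(\<lambda>n. \<integral>x. (H1_deriv (v n) x - g x)\<^sup>2 \<partial>lborel) \<longlonglongrightarrow> 0"
    by (rule L2_complete[OF vD(4) cg])
  have "weak_deriv u g" by (rule weak_deriv_L2_limit[OF vD(3,2,4) uL2 g vu Gg])
  then show uH1: "u \<in> H1" using H1I[OF u uL2 _ g] by blast
  have "AE x in lborel. H1_deriv u x = g x"
    by (rule H1_deriv_AE_eq[OF uH1 \<open>weak_deriv u g\<close> g])
  then have "(\<integral>x. (H1_deriv (v n) x - H1_deriv u x)\<^sup>2 \<partial>lborel)
      = (\<integral>x. (H1_deriv (v n) x - g x)\<^sup>2 \<partial>lborel)" for n
    using H1_D(4)[OF uH1] g vD(4)[of n] by (intro integral_cong_AE) (auto simp: L2_def elim: AE_mp)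
  with Gg show "(\<lambda>n. \<integral>x. (H1_deriv (v n) x - H1_deriv u x)\<^sup>2 \<partial>lborel) \<longlonglongrightarrow> 0" by simp
qed

lemma H1_holder:
  assumes "u \<in> H1"
  shows "(u x - u y)\<^sup>2 \<le> \<bar>x - y\<bar> * (\<integral>t. (H1_deriv u t)\<^sup>2 \<partial>lborel)"
proof -
  note u = H1_D[OF assms]
  have *: "(u x - u y)\<^sup>2 \<le> (x - y) * (\<integral>t. (H1_deriv u t)\<^sup>2 \<partial>lborel)" if "y \<le> x" for x y
  proof -
    have "(u x - u y)\<^sup>2 = (\<integral>t. H1_deriv u t * indicator {y<..x} t \<partial>lborel)\<^sup>2"
      using weak_deriv_FTC[OF u(3,1,4) that] by simp
    also have "\<dots> \<le> (\<integral>t. (H1_deriv u t)\<^sup>2 \<partial>lborel) * (\<integral>t. (indicator {y<..x} t :: real)\<^sup>2 \<partial>lborel)"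
      by (rule L2_Cauchy_Schwarz[OF u(4) L2_indicator_interval(1)])
    also have "(\<lambda>t. (indicator {y<..x} t :: real)\<^sup>2) = indicator {y<..x}"
      by (auto simp: indicator_def)
    finally show ?thesis using that by (simp add: mult.commute)
  qed
  show ?thesis
    using *[of x y] *[of y x] by (cases "y \<le> x") (auto simp: power2_commute)
qed

lemma H1_bounded:
  assumes "u \<in> H1"
  obtains B where "\<And>x. \<bar>u x\<bar> \<le> B"
proof -
  define G where "G = (\<integral>t. (H1_deriv u t)\<^sup>2 \<partial>lborel)"
  define U where "U = (\<integral>t. (u t)\<^sup>2 \<partial>lborel)"
  have iu: "integrable lborel (\<lambda>t. (u t)\<^sup>2)" using H1_D(2)[OF assms] by (simp add: L2_def)
  have "(u x)\<^sup>2 \<le> 2 * U + 2 * G" for x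
  proof -
    let ?I = "indicator {x<..x+1} :: real \<Rightarrow> real"
    have pt: "(u x)\<^sup>2 * ?I t \<le> 2 * ((u t)\<^sup>2 * ?I t) + 2 * G * ?I t" for t
    proof (cases "t \<in> {x<..x+1}")
      case True
      have "(u t - u x)\<^sup>2 \<le> \<bar>t - x\<bar> * G" using H1_holder[OF assms, of t x] by (simp add: G_def)
      also have "\<dots> \<le> G" using True by (intro mult_left_le_one_le) (auto simp: G_def)
      finally have "(u t - u x)\<^sup>2 \<le> G" .
      moreover have "(u x)\<^sup>2 \<le> 2 * (u t)\<^sup>2 + 2 * (u t - u x)\<^sup>2"
        using zero_le_power2[of "2 * u t - u x"] by (simp add: power2_eq_square algebra_simps)
      ultimately show ?thesis using True by simp
    qed simp
    have "(u x)\<^sup>2 = (\<integral>t. (u x)\<^sup>2 * ?I t \<partial>lborel)" by simp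
    also have "\<dots> \<le> (\<integral>t. 2 * ((u t)\<^sup>2 * ?I t) + 2 * G * ?I t \<partial>lborel)"
      using pt iu by (intro integral_mono Bochner_Integration.integrable_add integrable_mult_right
          integrable_real_mult_indicator) auto
    also have "\<dots> = 2 * (\<integral>t. (u t)\<^sup>2 * ?I t \<partial>lborel) + 2 * G"
      using iu by (subst Bochner_Integration.integral_add) (auto intro: integrable_real_mult_indicator)
    also have "(\<integral>t. (u t)\<^sup>2 * ?I t \<partial>lborel) \<le> U"
      unfolding U_def using iu
      by (intro integral_mono integrable_real_mult_indicator) (auto simp: indicator_def)
    finally show ?thesis by linarith
  qed
  then have "\<bar>u x\<bar> \<le> sqrt (2 * U + 2 * G)" for x
    using real_sqrt_le_mono by fastforce
  then show ?thesis using that by blast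
qed

lemma H1_abs_le_sup_norm:
  assumes "u \<in> H1" shows "\<bar>u x\<bar> \<le> sup_norm u"
proof -
  obtain B where "\<And>x. \<bar>u x\<bar> \<le> B" using H1_bounded[OF assms] by blast
  then have "bdd_above (range (\<lambda>x. \<bar>u x\<bar>))" by (intro bdd_aboveI2)
  then show ?thesis unfolding sup_norm_def by (rule cSUP_upper[OF UNIV_I])
qed

lemma Kset_abs_le_1: "u \<in> Kset a \<Longrightarrow> \<bar>u x\<bar> \<le> 1"
  using H1_abs_le_sup_norm[of u x] by (auto simp: Kset_def)

lemma KsetI:
  assumes "v \<in> H1" "\<And>x. \<bar>v x\<bar> \<le> 1" "v a = 1" shows "v \<in> Kset a"
proof -
  have "sup_norm v = 1"
    unfolding sup_norm_def by (rule cSup_eq_maximum) (use assms in \<open>auto intro!: image_eqI[of _ _ a]\<close>)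
  then show ?thesis using assms by (simp add: Kset_def)
qed

lemma ramp_H1: assumes "0 < e" shows "ramp y x e \<in> H1"
proof (rule H1I)
  show "continuous_on UNIV (ramp y x e)" by (rule test_fun_continuous[OF ramp_test_fun[OF assms]])
  show "L2 (ramp y x e)" by (rule test_fun_L2(1)[OF ramp_test_fun[OF assms]])
  show "weak_deriv (ramp y x e) (deriv (ramp y x e))"
    unfolding deriv_ramp by (rule weak_deriv_classical[OF ramp_DERIV])
       (simp add: continuous_on_diff mollifier_continuous)
  show "L2 (deriv (ramp y x e))" by (rule test_fun_L2(2)[OF ramp_test_fun[OF assms]])
qed

lemma Kset_nonempty: "Kset a \<noteq> {}"
proof -
  have "ramp (a - 1) a (1/2) \<in> Kset a"
    by (rule KsetI[OF ramp_H1 ramp_bounds]) (simp_all add: ramp_def smooth_step_eq_0 smooth_step_eq_1)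
  then show ?thesis by blast
qed

lemma holder_half_modulus:
  fixes f :: "real \<Rightarrow> real"
  assumes "\<And>x y. (f x - f y)\<^sup>2 \<le> M * \<bar>x - y\<bar>" "0 < e" "\<bar>x - y\<bar> < e\<^sup>2 / (\<bar>M\<bar> + 1)"
  shows "\<bar>f x - f y\<bar> < e"
proof -
  have "(f x - f y)\<^sup>2 \<le> (\<bar>M\<bar> + 1) * \<bar>x - y\<bar>"
    using assms(1)[of x y] abs_ge_self[of M] by (smt (verit) abs_ge_zero mult_right_mono)
  also have "\<dots> < e\<^sup>2" using assms(3) by (simp add: field_simps add_pos_nonneg)
  finally have "\<bar>f x - f y\<bar>\<^sup>2 < e\<^sup>2" by simp
  then show ?thesis by (rule power_less_imp_less_base) (use \<open>0 < e\<close> in simp)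
qed

lemma holder_half_continuous:
  fixes f :: "real \<Rightarrow> real"
  assumes "\<And>x y. (f x - f y)\<^sup>2 \<le> M * \<bar>x - y\<bar>"
  shows "continuous_on UNIV f"
  unfolding continuous_on_iff
proof (intro ballI allI impI)
  fix x e :: real assume "0 < e"
  then have "0 < e\<^sup>2 / (\<bar>M\<bar> + 1)" by (simp add: add_pos_nonneg)
  moreover have "dist (f x') (f x) < e" if "dist x' x < e\<^sup>2 / (\<bar>M\<bar> + 1)" for x'
    using holder_half_modulus[OF assms \<open>0 < e\<close>] that by (simp add: dist_real_def)
  ultimately show "\<exists>d>0. \<forall>x'\<in>UNIV. dist x' x < d \<longrightarrow> dist (f x') (f x) < e" by blast
qed

lemma holder_half_pointwise_convergent_subseq:
  fixes w :: "nat \<Rightarrow> real \<Rightarrow> real"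
  assumes bnd: "\<And>n x. \<bar>w n x\<bar> \<le> B" and eqc: "\<And>n x y. (w n x - w n y)\<^sup>2 \<le> M * \<bar>x - y\<bar>"
  obtains s u where "strict_mono s" "\<And>x. (\<lambda>n. w (s n) x) \<longlonglongrightarrow> u x"
proof -
  obtain s where s: "strict_mono s" and rat: "\<And>q. q \<in> \<rat> \<Longrightarrow> \<exists>l. (\<lambda>n. w (s n) q) \<longlonglongrightarrow> l"
    using function_convergent_subsequence[OF countable_rat, of w B] bnd by auto
  have "Cauchy (\<lambda>n. w (s n) x)" for x
  proof (rule Cauchy_iff[THEN iffD2], intro allI impI)
    fix e :: real assume "0 < e"
    then have "0 < (e / 3)\<^sup>2 / (\<bar>M\<bar> + 1)" by (simp add: add_pos_nonneg)
    then obtain q where "q \<in> \<rat>" and q: "\<bar>x - q\<bar> < (e / 3)\<^sup>2 / (\<bar>M\<bar> + 1)"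
      using Rats_dense_in_real[of x "x + (e / 3)\<^sup>2 / (\<bar>M\<bar> + 1)"] by (auto simp: abs_if)
    have close: "\<bar>w n x - w n q\<bar> < e / 3" for n
      using holder_half_modulus[OF eqc _ q] \<open>0 < e\<close> by simp
    have "Cauchy (\<lambda>n. w (s n) q)" using rat[OF \<open>q \<in> \<rat>\<close>] convergent_Cauchy convergent_def by blast
    then obtain N where N: "\<And>m n. m \<ge> N \<Longrightarrow> n \<ge> N \<Longrightarrow> \<bar>w (s m) q - w (s n) q\<bar> < e / 3"
      using \<open>0 < e\<close> unfolding Cauchy_iff by (metis real_norm_def zero_less_divide_iff zero_less_numeral)
    have "\<bar>w (s m) x - w (s n) x\<bar> < e" if "N \<le> m" "N \<le> n" for m n
      using close[of "s m"] close[of "s n"] N[OF that] by linarith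
    then show "\<exists>N. \<forall>m\<ge>N. \<forall>n\<ge>N. norm (w (s m) x - w (s n) x) < e" by auto
  qed
  then show ?thesis
    using that[OF s, of "\<lambda>x. lim (\<lambda>n. w (s n) x)"] by (simp add: Cauchy_convergent_iff convergent_LIMSEQ_iff)
qed

lemma Kset_holder:
  assumes "w \<in> Kset a" "(\<integral>x. (H1_deriv w x)\<^sup>2 \<partial>lborel) \<le> M"
  shows "(w x - w y)\<^sup>2 \<le> M * \<bar>x - y\<bar>"
proof -
  have "(w x - w y)\<^sup>2 \<le> \<bar>x - y\<bar> * (\<integral>x. (H1_deriv w x)\<^sup>2 \<partial>lborel)"
    using assms(1) by (intro H1_holder) (simp add: Kset_def)
  also have "\<dots> \<le> \<bar>x - y\<bar> * M" using assms(2) by (intro mult_left_mono) auto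
  finally show ?thesis by (simp add: mult.commute)
qed

lemma Kset_pointwise_limit:
  assumes w: "\<And>n. w n \<in> Kset a" "\<And>n. (\<integral>x. (H1_deriv (w n) x)\<^sup>2 \<partial>lborel) \<le> M"
    and pw: "\<And>x. (\<lambda>n. w n x) \<longlonglongrightarrow> u x"
  shows "continuous_on UNIV u" "\<And>x. \<bar>u x\<bar> \<le> 1" "u a = 1"
proof -
  have "(u x - u y)\<^sup>2 \<le> M * \<bar>x - y\<bar>" for x y
  proof (rule LIMSEQ_le_const2)
    show "(\<lambda>n. (w n x - w n y)\<^sup>2) \<longlonglongrightarrow> (u x - u y)\<^sup>2" by (intro tendsto_intros pw)
  qed (use Kset_holder[OF w] in auto)
  then show "continuous_on UNIV u" by (rule holder_half_continuous)
  show "\<bar>u x\<bar> \<le> 1" for x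
    using Kset_abs_le_1[OF w(1)] by (intro LIMSEQ_le_const2[OF tendsto_rabs[OF pw]]) auto
  have "(\<lambda>n. w n a) = (\<lambda>n. 1)" using w(1) by (simp add: Kset_def)
  then show "u a = 1" using pw[of a] LIMSEQ_const_iff by metis
qed

lemma Kset_pointwise_convergent_subseq:
  fixes w :: "nat \<Rightarrow> real \<Rightarrow> real"
  assumes "\<And>n. w n \<in> Kset a" "\<And>n. (\<integral>x. (H1_deriv (w n) x)\<^sup>2 \<partial>lborel) \<le> M"
  obtains s u where "strict_mono s" "\<And>x. (\<lambda>n. w (s n) x) \<longlonglongrightarrow> u x"
proof -
  have "\<bar>w n x\<bar> \<le> 1" "(w n x - w n y)\<^sup>2 \<le> M * \<bar>x - y\<bar>" for n x y
    using Kset_abs_le_1[OF assms(1)] Kset_holder[OF assms] by auto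
  then show ?thesis using that holder_half_pointwise_convergent_subseq[where w=w] by blast
qed

section \<open>The two parts of the energy\<close>

lemma esssup_potential_bounds:
  fixes V0 :: "real \<Rightarrow> real"
  assumes "esssup lborel (\<lambda>x. ereal \<bar>V0 x\<bar>) < \<infinity>"
    and "esssup lborel (\<lambda>x. ereal (- V0 x)) < 0"
  obtains c K where "0 < c" "AE x in lborel. c \<le> V0 x" "AE x in lborel. \<bar>V0 x\<bar> \<le> K"
proof -
  obtain K where K: "esssup lborel (\<lambda>x. ereal \<bar>V0 x\<bar>) \<le> ereal K"
    using assms(1) by (cases "esssup lborel (\<lambda>x. ereal \<bar>V0 x\<bar>)") auto
  obtain c where c: "0 < c" "esssup lborel (\<lambda>x. ereal (- V0 x)) \<le> ereal (- c)"
    using assms(2) by (cases "esssup lborel (\<lambda>x. ereal (- V0 x))")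
      (auto intro: that[of 1] that[of "- _"])
  have "AE x in lborel. c \<le> V0 x"
    using esssup_AE[of "\<lambda>x. ereal (- V0 x)" lborel]
    by eventually_elim (use c(2) in \<open>auto dest: order_trans\<close>)
  moreover have "AE x in lborel. \<bar>V0 x\<bar> \<le> K"
    using esssup_AE[of "\<lambda>x. ereal \<bar>V0 x\<bar>" lborel]
    by eventually_elim (use K in \<open>auto dest: order_trans\<close>)
  ultimately show ?thesis using that c(1) by blast
qed

lemma integrable_potential_mult:
  fixes V0 :: "real \<Rightarrow> real"
  assumes "V0 \<in> borel_measurable lborel" "AE x in lborel. \<bar>V0 x\<bar> \<le> K" "L2 f" "L2 g"
  shows "integrable lborel (\<lambda>x. V0 x * f x * g x)"
proof (rule Bochner_Integration.integrable_bound)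
  show "integrable lborel (\<lambda>x. \<bar>K\<bar> * (f x * g x))"
    using L2_mult_integrable[OF assms(3,4)] by simp
  show "(\<lambda>x. V0 x * f x * g x) \<in> borel_measurable lborel"
    using assms(1,3,4) by (auto simp: L2_def)
  show "AE x in lborel. norm (V0 x * f x * g x) \<le> norm (\<bar>K\<bar> * (f x * g x))"
    using assms(2)
  proof eventually_elim
    case (elim x)
    have "\<bar>V0 x\<bar> * \<bar>f x * g x\<bar> \<le> \<bar>K\<bar> * \<bar>f x * g x\<bar>" using elim by (intro mult_right_mono) auto
    then show ?case by (simp add: abs_mult mult.assoc)
  qed
qed

lemma L2_potential_mult:
  fixes V0 :: "real \<Rightarrow> real"
  assumes "V0 \<in> borel_measurable lborel" "AE x in lborel. \<bar>V0 x\<bar> \<le> K" "L2 u"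
  shows "L2 (\<lambda>x. V0 x * u x)"
proof -
  have "integrable lborel (\<lambda>x. V0 x * (V0 x * u x) * u x)"
  proof (rule Bochner_Integration.integrable_bound)
    show "integrable lborel (\<lambda>x. K\<^sup>2 * (u x)\<^sup>2)" using assms(3) by (simp add: L2_def)
    show "(\<lambda>x. V0 x * (V0 x * u x) * u x) \<in> borel_measurable lborel"
      using assms(1,3) by (auto simp: L2_def)
    show "AE x in lborel. norm (V0 x * (V0 x * u x) * u x) \<le> norm (K\<^sup>2 * (u x)\<^sup>2)"
      using assms(2)
    proof eventually_elim
      case (elim x)
      then have "(V0 x)\<^sup>2 * (u x)\<^sup>2 \<le> K\<^sup>2 * (u x)\<^sup>2"
        by (intro mult_right_mono) (auto simp: abs_le_square_iff[symmetric])
      then show ?case by (simp add: power2_eq_square abs_mult algebra_simps)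
    qed
  qed
  then show ?thesis using assms by (auto simp: L2_def power2_eq_square algebra_simps)
qed

lemma potential_coercive:
  fixes V0 :: "real \<Rightarrow> real"
  assumes "V0 \<in> borel_measurable lborel" "AE x in lborel. \<bar>V0 x\<bar> \<le> K"
    and "AE x in lborel. c \<le> V0 x" and f: "L2 f"
  shows "c * (\<integral>x. (f x)\<^sup>2 \<partial>lborel) \<le> (\<integral>x. V0 x * f x * f x \<partial>lborel)"
proof -
  have "c * (\<integral>x. (f x)\<^sup>2 \<partial>lborel) = (\<integral>x. c * (f x)\<^sup>2 \<partial>lborel)" by simp
  also have "\<dots> \<le> (\<integral>x. V0 x * f x * f x \<partial>lborel)"
  proof (rule integral_mono_AE)
    show "integrable lborel (\<lambda>x. c * (f x)\<^sup>2)" using f by (simp add: L2_def)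
    show "integrable lborel (\<lambda>x. V0 x * f x * f x)" by (rule integrable_potential_mult[OF assms(1,2) f f])
    show "AE x in lborel. c * (f x)\<^sup>2 \<le> V0 x * f x * f x"
      using assms(3)
    proof eventually_elim
      case (elim x)
      have "c * (f x * f x) \<le> V0 x * (f x * f x)" using elim by (intro mult_right_mono) auto
      then show ?case by (simp add: power2_eq_square mult.assoc)
    qed
  qed
  finally show ?thesis .
qed

lemma potential_form_abs_bound:
  fixes V0 :: "real \<Rightarrow> real"
  assumes V0: "V0 \<in> borel_measurable lborel" "AE x in lborel. \<bar>V0 x\<bar> \<le> K" and f: "L2 f"
  shows "\<bar>\<integral>x. V0 x * f x * f x \<partial>lborel\<bar> \<le> \<bar>K\<bar> * (\<integral>x. (f x)\<^sup>2 \<partial>lborel)"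
proof -
  have "\<bar>\<integral>x. V0 x * f x * f x \<partial>lborel\<bar> \<le> (\<integral>x. \<bar>V0 x * f x * f x\<bar> \<partial>lborel)"
    by (rule integral_abs_bound)
  also have "\<dots> \<le> (\<integral>x. \<bar>K\<bar> * (f x)\<^sup>2 \<partial>lborel)"
  proof (rule integral_mono_AE)
    show "integrable lborel (\<lambda>x. \<bar>V0 x * f x * f x\<bar>)"
      using integrable_potential_mult[OF V0 f f] by simp
    show "integrable lborel (\<lambda>x. \<bar>K\<bar> * (f x)\<^sup>2)" using f by (simp add: L2_def)
    show "AE x in lborel. \<bar>V0 x * f x * f x\<bar> \<le> \<bar>K\<bar> * (f x)\<^sup>2"
      using V0(2)
    proof eventually_elim
      case (elim x)
      have "\<bar>V0 x\<bar> * (f x)\<^sup>2 \<le> \<bar>K\<bar> * (f x)\<^sup>2" using elim by (intro mult_right_mono) auto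
      then show ?case by (simp add: abs_mult power2_eq_square mult.assoc)
    qed
  qed
  finally show ?thesis by simp
qed

lemma potential_form_tendsto:
  fixes V0 :: "real \<Rightarrow> real"
  assumes V0: "V0 \<in> borel_measurable lborel" "AE x in lborel. \<bar>V0 x\<bar> \<le> K"
    and f: "\<And>n. L2 (f n)" "L2 f0" and conv: "(\<lambda>n. \<integral>x. (f n x - f0 x)\<^sup>2 \<partial>lborel) \<longlonglongrightarrow> 0"
  shows "(\<lambda>n. \<integral>x. V0 x * f n x * f n x \<partial>lborel) \<longlonglongrightarrow> (\<integral>x. V0 x * f0 x * f0 x \<partial>lborel)"
proof -
  define d where "d n x = f n x - f0 x" for n x
  have d: "L2 (d n)" for n unfolding d_def using f by (intro L2_diff)
  have V0f: "L2 (\<lambda>x. V0 x * f0 x)" by (rule L2_potential_mult[OF V0 f(2)])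
  have split: "(\<integral>x. V0 x * f n x * f n x \<partial>lborel)
      = (\<integral>x. V0 x * d n x * d n x \<partial>lborel) + 2 * (\<integral>x. d n x * (V0 x * f0 x) \<partial>lborel)
        + (\<integral>x. V0 x * f0 x * f0 x \<partial>lborel)" for n
  proof -
    have "(\<lambda>x. V0 x * f n x * f n x)
        = (\<lambda>x. V0 x * d n x * d n x + 2 * (d n x * (V0 x * f0 x)) + V0 x * f0 x * f0 x)"
      by (auto simp: d_def algebra_simps)
    then show ?thesis
      using integrable_potential_mult[OF V0 d d, of n] L2_mult_integrable[OF d V0f, of n]
        integrable_potential_mult[OF V0 f(2) f(2)] by simp
  qed
  have "(\<lambda>n. \<integral>x. V0 x * d n x * d n x \<partial>lborel) \<longlonglongrightarrow> 0"
  proof (rule Lim_null_comparison[OF always_eventually])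
    show "\<forall>n. norm (\<integral>x. V0 x * d n x * d n x \<partial>lborel) \<le> \<bar>K\<bar> * (\<integral>x. (d n x)\<^sup>2 \<partial>lborel)"
      using potential_form_abs_bound[OF V0 d] by simp
    show "(\<lambda>n. \<bar>K\<bar> * (\<integral>x. (d n x)\<^sup>2 \<partial>lborel)) \<longlonglongrightarrow> 0"
      using tendsto_mult_right_zero[OF conv] by (simp add: d_def)
  qed
  moreover have "(\<lambda>n. \<integral>x. d n x * (V0 x * f0 x) \<partial>lborel) \<longlonglongrightarrow> 0"
    using L2_inner_tendsto[OF d _ V0f, of "\<lambda>_. 0"] conv by (simp add: d_def L2_def)
  ultimately show ?thesis unfolding split
    using tendsto_add[OF tendsto_add[OF _ tendsto_mult[OF tendsto_const]] tendsto_const] by force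
qed

lemma finite_borel_measure_continuous_measurable:
  assumes "finite_borel_measure \<mu>" "continuous_on UNIV f"
  shows "f \<in> borel_measurable \<mu>"
proof -
  have eq: "borel_measurable \<mu> = borel_measurable borel"
    using assms(1) by (intro measurable_cong_sets) (auto simp: finite_borel_measure_def)
  show ?thesis unfolding eq by (rule borel_measurable_continuous_onI[OF assms(2)])
qed

lemma square_integral_bounds:
  fixes u :: "real \<Rightarrow> real"
  assumes "finite_borel_measure \<mu>" "continuous_on UNIV u" "\<And>x. \<bar>u x\<bar> \<le> 1"
  shows "0 \<le> (\<integral>x. u x * u x \<partial>\<mu>)" "(\<integral>x. u x * u x \<partial>\<mu>) \<le> measure \<mu> (space \<mu>)"
proof -
  interpret finite_measure \<mu> using assms(1) by (simp add: finite_borel_measure_def)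
  have b: "\<bar>u x * u x\<bar> \<le> 1" for x
    using mult_le_one[OF assms(3)[of x] abs_ge_zero assms(3)[of x]] by (simp only: abs_mult)
  have "integrable \<mu> (\<lambda>x. u x * u x)"
    using b finite_borel_measure_continuous_measurable[OF assms(1,2)]
    by (intro integrable_const_bound[where B=1]) auto
  then have "(\<integral>x. u x * u x \<partial>\<mu>) \<le> (\<integral>x. 1 \<partial>\<mu>)"
    by (rule integral_mono) (use b in \<open>auto simp: abs_le_iff\<close>)
  then show "(\<integral>x. u x * u x \<partial>\<mu>) \<le> measure \<mu> (space \<mu>)" by simp
qed simp

lemma square_integral_tendsto:
  fixes f :: "nat \<Rightarrow> real \<Rightarrow> real"
  assumes \<mu>: "finite_borel_measure \<mu>" and f: "\<And>n. continuous_on UNIV (f n)" "\<And>n x. \<bar>f n x\<bar> \<le> 1"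
    and conv: "\<And>x. (\<lambda>n. f n x) \<longlonglongrightarrow> u x"
  shows "(\<lambda>n. \<integral>x. f n x * f n x \<partial>\<mu>) \<longlonglongrightarrow> (\<integral>x. u x * u x \<partial>\<mu>)"
proof -
  interpret finite_measure \<mu> using \<mu> by (simp add: finite_borel_measure_def)
  have fm: "f n \<in> borel_measurable \<mu>" for n
    by (rule finite_borel_measure_continuous_measurable[OF \<mu> f(1)])
  have "u \<in> borel_measurable \<mu>" by (rule borel_measurable_LIMSEQ_real[where u=f]) (use conv fm in auto)
  then show ?thesis
  proof (intro integral_dominated_convergence[where w="\<lambda>_. 1"])
    show "AE x in \<mu>. norm (f n x * f n x) \<le> 1" for n
    proof (rule AE_I2)
      fix x show "norm (f n x * f n x) \<le> 1"
        using mult_le_one[OF f(2)[of n x] abs_ge_zero f(2)[of n x]] by (simp only: real_norm_def abs_mult)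
    qed
  qed (use fm conv in \<open>auto intro!: tendsto_mult\<close>)
qed

definition quad_energy :: "(real \<Rightarrow> real) \<Rightarrow> (real \<Rightarrow> real) \<Rightarrow> real" where
  "quad_energy V0 u = (\<integral>x. (H1_deriv u x)\<^sup>2 \<partial>lborel) + (\<integral>x. V0 x * u x * u x \<partial>lborel)"

definition measure_energy :: "real measure \<Rightarrow> real measure \<Rightarrow> (real \<Rightarrow> real) \<Rightarrow> real" where
  "measure_energy mu_p mu_m u = (\<integral>x. u x * u x \<partial>mu_p) - (\<integral>x. u x * u x \<partial>mu_m)"

lemma Ifun_eq: "Ifun u V0 mu_p mu_m = quad_energy V0 u + measure_energy mu_p mu_m u"
  by (simp add: Ifun_def Vform_def quad_energy_def measure_energy_def)

lemma measure_energy_lower_bound: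
  assumes "finite_borel_measure mu_p" "finite_borel_measure mu_m" "u \<in> Kset a"
  shows "- measure mu_m (space mu_m) \<le> measure_energy mu_p mu_m u"
proof -
  have u: "continuous_on UNIV u" "\<And>x. \<bar>u x\<bar> \<le> 1"
    using assms(3) H1_D(1) Kset_abs_le_1 by (auto simp: Kset_def)
  show ?thesis
    using square_integral_bounds[OF assms(1) u] square_integral_bounds[OF assms(2) u]
    unfolding measure_energy_def by linarith
qed

lemma quad_energy_lower_bound:
  assumes "V0 \<in> borel_measurable lborel" "AE x in lborel. \<bar>V0 x\<bar> \<le> K"
    and "AE x in lborel. c \<le> V0 x" "0 \<le> c" "u \<in> H1"
  shows "(\<integral>x. (H1_deriv u x)\<^sup>2 \<partial>lborel) + c * (\<integral>x. (u x)\<^sup>2 \<partial>lborel) \<le> quad_energy V0 u"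
    and "(\<integral>x. (H1_deriv u x)\<^sup>2 \<partial>lborel) \<le> quad_energy V0 u" "0 \<le> quad_energy V0 u"
proof -
  show *: "(\<integral>x. (H1_deriv u x)\<^sup>2 \<partial>lborel) + c * (\<integral>x. (u x)\<^sup>2 \<partial>lborel) \<le> quad_energy V0 u"
    using potential_coercive[OF assms(1-3) H1_D(2)[OF assms(5)]] by (simp add: quad_energy_def)
  have "0 \<le> c * (\<integral>x. (u x)\<^sup>2 \<partial>lborel)" "0 \<le> (\<integral>x. (H1_deriv u x)\<^sup>2 \<partial>lborel)"
    using assms(4) by simp_all
  with * show "(\<integral>x. (H1_deriv u x)\<^sup>2 \<partial>lborel) \<le> quad_energy V0 u" "0 \<le> quad_energy V0 u"
    by linarith+
qed

lemma quad_energy_tendsto: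
  fixes V0 :: "real \<Rightarrow> real"
  assumes V0: "V0 \<in> borel_measurable lborel" "AE x in lborel. \<bar>V0 x\<bar> \<le> K"
    and v: "\<And>n. v n \<in> H1" and u: "u \<in> H1"
    and vu: "(\<lambda>n. \<integral>x. (v n x - u x)\<^sup>2 \<partial>lborel) \<longlonglongrightarrow> 0"
    and dvu: "(\<lambda>n. \<integral>x. (H1_deriv (v n) x - H1_deriv u x)\<^sup>2 \<partial>lborel) \<longlonglongrightarrow> 0"
  shows "(\<lambda>n. quad_energy V0 (v n)) \<longlonglongrightarrow> quad_energy V0 u"
  unfolding quad_energy_def
  using tendsto_add[OF L2_square_integral_tendsto[OF H1_D(4)[OF v] H1_D(4)[OF u] dvu]
      potential_form_tendsto[OF V0 H1_D(2)[OF v] H1_D(2)[OF u] vu]] .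

lemma measure_energy_tendsto:
  assumes "finite_borel_measure mu_p" "finite_borel_measure mu_m"
    and w: "\<And>n. w n \<in> Kset a" and pw: "\<And>x. (\<lambda>n. w n x) \<longlonglongrightarrow> u x"
  shows "(\<lambda>n. measure_energy mu_p mu_m (w n)) \<longlonglongrightarrow> measure_energy mu_p mu_m u"
proof -
  have "continuous_on UNIV (w n)" "\<bar>w n x\<bar> \<le> 1" for n x
    using w[of n] H1_D(1) Kset_abs_le_1 by (auto simp: Kset_def)
  then show ?thesis unfolding measure_energy_def
    by (intro tendsto_diff square_integral_tendsto assms(1,2) pw)
qed

lemma quad_energy_midpoint:
  fixes V0 :: "real \<Rightarrow> real"
  assumes V0: "V0 \<in> borel_measurable lborel" "AE x in lborel. \<bar>V0 x\<bar> \<le> K"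
    and cV: "AE x in lborel. c \<le> V0 x" and v: "v \<in> H1" and w: "w \<in> H1"
  shows "(\<integral>x. (H1_deriv v x - H1_deriv w x)\<^sup>2 \<partial>lborel) + c * (\<integral>x. (v x - w x)\<^sup>2 \<partial>lborel)
    \<le> 2 * (quad_energy V0 v + quad_energy V0 w - 2 * quad_energy V0 (\<lambda>x. (1/2) * v x + (1/2) * w x))"
proof -
  let ?m = "\<lambda>x. (1/2) * v x + (1/2) * w x"
  let ?a = "H1_deriv v" and ?b = "H1_deriv w"
  note v' = H1_D[OF v] and w' = H1_D[OF w]
  have m: "?m \<in> H1" by (rule H1_linear_combination(1)[OF v w])
  have Lab: "L2 (\<lambda>x. (1/2) * ?a x + (1/2) * ?b x)" using v' w' by (intro L2_add L2_cmult)
  have "AE x in lborel. H1_deriv ?m x = (1/2) * ?a x + (1/2) * ?b x"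
    by (rule H1_linear_combination(2)[OF v w])
  then have "(\<integral>x. (H1_deriv ?m x)\<^sup>2 \<partial>lborel) = (\<integral>x. ((1/2) * ?a x + (1/2) * ?b x)\<^sup>2 \<partial>lborel)"
    using H1_D(4)[OF m] Lab by (intro integral_cong_AE) (auto simp: L2_def elim: AE_mp)
  moreover have "(1/2) * (\<integral>x. (?a x - ?b x)\<^sup>2 \<partial>lborel) = (\<integral>x. (?a x)\<^sup>2 \<partial>lborel)
      + (\<integral>x. (?b x)\<^sup>2 \<partial>lborel) - 2 * (\<integral>x. ((1/2) * ?a x + (1/2) * ?b x)\<^sup>2 \<partial>lborel)"
  proof -
    have "(\<lambda>x. (1/2) * (?a x - ?b x)\<^sup>2)
        = (\<lambda>x. (?a x)\<^sup>2 + (?b x)\<^sup>2 - 2 * ((1/2) * ?a x + (1/2) * ?b x)\<^sup>2)"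
      by (auto simp: power2_eq_square algebra_simps)
    then have "(1/2) * (\<integral>x. (?a x - ?b x)\<^sup>2 \<partial>lborel)
        = (\<integral>x. (?a x)\<^sup>2 + (?b x)\<^sup>2 - 2 * ((1/2) * ?a x + (1/2) * ?b x)\<^sup>2 \<partial>lborel)"
      by (simp only: integral_mult_right_zero[symmetric])
    then show ?thesis using v'(4) w'(4) Lab by (simp add: L2_def)
  qed
  moreover have "(1/2) * (\<integral>x. V0 x * (v x - w x) * (v x - w x) \<partial>lborel)
      = (\<integral>x. V0 x * v x * v x \<partial>lborel) + (\<integral>x. V0 x * w x * w x \<partial>lborel)
        - 2 * (\<integral>x. V0 x * ?m x * ?m x \<partial>lborel)"
  proof -
    have "(\<lambda>x. (1/2) * (V0 x * (v x - w x) * (v x - w x)))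
        = (\<lambda>x. V0 x * v x * v x + V0 x * w x * w x - 2 * (V0 x * ?m x * ?m x))"
      by (auto simp: algebra_simps)
    then have "(1/2) * (\<integral>x. V0 x * (v x - w x) * (v x - w x) \<partial>lborel)
        = (\<integral>x. V0 x * v x * v x + V0 x * w x * w x - 2 * (V0 x * ?m x * ?m x) \<partial>lborel)"
      by (simp only: integral_mult_right_zero[symmetric])
    then show ?thesis
      using integrable_potential_mult[OF V0] v'(2) w'(2) H1_D(2)[OF m] by simp
  qed
  moreover have "c * (\<integral>x. (v x - w x)\<^sup>2 \<partial>lborel) \<le> (\<integral>x. V0 x * (v x - w x) * (v x - w x) \<partial>lborel)"
    by (rule potential_coercive[OF V0 cV L2_diff[OF v'(2) w'(2)]])
  ultimately show ?thesis by (simp add: quad_energy_def)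
qed

lemma near_minimizers:
  fixes f :: "'a \<Rightarrow> real"
  assumes "\<And>n. A n \<noteq> {}" "\<And>n. bdd_below (f ` A n)"
  obtains x where "\<And>n. x n \<in> A n" "\<And>n. f (x n) < (INF a\<in>A n. f a) + 1 / Suc n"
proof -
  have "\<exists>a\<in>A n. f a < (INF a\<in>A n. f a) + 1 / Suc n" for n
    using cINF_less_iff[OF assms, of n "(INF a\<in>A n. f a) + 1 / Suc n"] by simp
  then show ?thesis using that by metis
qed

text \<open>The midpoint of two near-minimisers cannot have energy below the infimum, which forces
  the two to be close.\<close>

lemma near_minimizers_Cauchy:
  fixes Q :: "'a \<Rightarrow> real" and D :: "'a \<Rightarrow> 'a \<Rightarrow> real" and mid :: "'a \<Rightarrow> 'a \<Rightarrow> 'a"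
  assumes anti: "\<And>n m. n \<le> m \<Longrightarrow> C m \<subseteq> C n"
    and mid: "\<And>n x y. x \<in> C n \<Longrightarrow> y \<in> C n \<Longrightarrow> mid x y \<in> C n"
    and par: "\<And>n x y. x \<in> C n \<Longrightarrow> y \<in> C n \<Longrightarrow> D x y \<le> 2 * (Q x + Q y - 2 * Q (mid x y))"
    and bdd: "\<And>n. bdd_below (Q ` C n)" and upper: "\<And>n. (INF x\<in>C n. Q x) \<le> M"
    and v: "\<And>n. v n \<in> C n" and near: "\<And>n. Q (v n) \<le> (INF x\<in>C n. Q x) + 1 / Suc n"
    and "0 < e"
  shows "\<exists>N. \<forall>n\<ge>N. \<forall>m\<ge>N. D (v n) (v m) < e"
proof -
  define d where "d n = (INF x\<in>C n. Q x)" for n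
  have d_le: "d n \<le> Q x" if "x \<in> C n" for n x unfolding d_def by (rule cINF_lower[OF bdd that])
  have ne: "C n \<noteq> {}" for n using v by blast
  have "incseq d"
    using anti bdd by (auto simp: incseq_def d_def intro!: cINF_superset_mono ne)
  moreover have "bdd_above (range d)" unfolding d_def by (rule bdd_aboveI2[OF upper])
  ultimately have dlim: "d \<longlonglongrightarrow> (SUP n. d n)" and d_dl: "\<And>n. d n \<le> (SUP n. d n)"
    by (auto intro: LIMSEQ_incseq_SUP cSUP_upper)
  define \<beta> where "\<beta> n = 2 * (2 * (1 / Suc n) + ((SUP n. d n) - d n))" for n
  have bound: "D (v n) (v m) \<le> \<beta> k" if "k \<le> n" "k \<le> m" "k = min n m" for n m k
  proof -
    have "v n \<in> C k" "v m \<in> C k" using v anti that(1,2) by blast+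
    then have "D (v n) (v m) \<le> 2 * (Q (v n) + Q (v m) - 2 * d k)"
      using par d_le mid by (smt (verit, best))
    moreover have "1 / real (Suc n) \<le> 1 / Suc k" "1 / real (Suc m) \<le> 1 / Suc k"
      using that by (simp_all add: frac_le)
    moreover have "d n \<le> (SUP n. d n)" "d m \<le> (SUP n. d n)" "d k = d n \<or> d k = d m"
      using d_dl that(3) by (auto simp: min_def)
    ultimately show ?thesis using near[of n] near[of m] by (simp add: \<beta>_def d_def) linarith
  qed
  have "(\<lambda>n. 1 / real (Suc n)) \<longlonglongrightarrow> 0"
    using LIMSEQ_inverse_real_of_nat by (simp add: inverse_eq_divide)
  from tendsto_mult[OF tendsto_const tendsto_add[OF tendsto_mult[OF tendsto_const this]
      tendsto_diff[OF tendsto_const dlim]]]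
  have "\<beta> \<longlonglongrightarrow> 2 * (2 * 0 + ((SUP n. d n) - (SUP n. d n)))" unfolding \<beta>_def .
  then have "\<exists>N. \<forall>n\<ge>N. norm (\<beta> n - 0) < e" using \<open>0 < e\<close> unfolding LIMSEQ_iff by simp
  then obtain N where N: "\<And>n. n \<ge> N \<Longrightarrow> \<beta> n < e" by fastforce
  show ?thesis
  proof (intro exI allI impI)
    fix n m assume "N \<le> n" "N \<le> m"
    then have "D (v n) (v m) \<le> \<beta> (min n m)" and "\<beta> (min n m) < e"
      by (auto intro: bound N)
    then show "D (v n) (v m) < e" by linarith
  qed
qed

lemma Cauchy_weighted_sum_split:
  fixes A B :: "nat \<Rightarrow> nat \<Rightarrow> real"
  assumes AB: "\<And>e. 0 < e \<Longrightarrow> \<exists>N. \<forall>n\<ge>N. \<forall>m\<ge>N. A n m + c * B n m < e"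
    and c: "0 < c" and nonneg: "\<And>n m. 0 \<le> A n m" "\<And>n m. 0 \<le> B n m" and "0 < e"
  shows "\<exists>N. \<forall>n\<ge>N. \<forall>m\<ge>N. A n m < e" "\<exists>N. \<forall>n\<ge>N. \<forall>m\<ge>N. B n m < e"
proof -
  obtain N1 where N1: "\<And>n m. N1 \<le> n \<Longrightarrow> N1 \<le> m \<Longrightarrow> A n m + c * B n m < e"
    using AB[OF \<open>0 < e\<close>] by blast
  have cB: "0 \<le> c * B n m" for n m using c nonneg(2) by simp
  have "A n m < e" if "N1 \<le> n" "N1 \<le> m" for n m using N1[OF that] cB[of n m] by linarith
  then show "\<exists>N. \<forall>n\<ge>N. \<forall>m\<ge>N. A n m < e" by blast
  obtain N2 where N2: "\<And>n m. N2 \<le> n \<Longrightarrow> N2 \<le> m \<Longrightarrow> A n m + c * B n m < c * e"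
    using AB[of "c * e"] c \<open>0 < e\<close> by auto
  have "c * B n m < c * e" if "N2 \<le> n" "N2 \<le> m" for n m
    using N2[OF that] nonneg(1)[of n m] by linarith
  then show "\<exists>N. \<forall>n\<ge>N. \<forall>m\<ge>N. B n m < e" using c by (auto simp: mult_less_cancel_left_pos)
qed

section \<open>Lower semicontinuity on the constraint set\<close>

definition tail_dev :: "(nat \<Rightarrow> real \<Rightarrow> real) \<Rightarrow> (real \<Rightarrow> real) \<Rightarrow> nat \<Rightarrow> real \<Rightarrow> real" where
  "tail_dev w u n x = (SUP m\<in>{n..}. \<bar>w m x - u x\<bar>)"

lemma
  fixes w :: "nat \<Rightarrow> real \<Rightarrow> real"
  assumes "(\<lambda>n. w n x) \<longlonglongrightarrow> u x"
  shows tail_dev_ge: "n \<le> m \<Longrightarrow> \<bar>w m x - u x\<bar> \<le> tail_dev w u n x"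
    and tail_dev_antimono: "n \<le> m \<Longrightarrow> tail_dev w u m x \<le> tail_dev w u n x"
    and tail_dev_tendsto_0: "(\<lambda>n. tail_dev w u n x) \<longlonglongrightarrow> 0"
proof -
  have "Bseq (\<lambda>m. w m x - u x)"
    using tendsto_diff[OF assms tendsto_const] by (intro convergent_imp_Bseq) (auto simp: convergent_def)
  then obtain B where B: "\<And>m. \<bar>w m x - u x\<bar> \<le> B" by (auto simp: Bseq_def)
  then have bdd: "bdd_above ((\<lambda>m. \<bar>w m x - u x\<bar>) ` {n..})" for n by (intro bdd_aboveI2)
  show ge: "\<bar>w m x - u x\<bar> \<le> tail_dev w u n x" if "n \<le> m" for n m
    unfolding tail_dev_def using that by (intro cSUP_upper[OF _ bdd]) simp
  show "n \<le> m \<Longrightarrow> tail_dev w u m x \<le> tail_dev w u n x" for n m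
    unfolding tail_dev_def by (rule cSUP_subset_mono) (auto intro: bdd)
  show "(\<lambda>n. tail_dev w u n x) \<longlonglongrightarrow> 0"
  proof (rule LIMSEQ_I)
    fix r :: real assume "0 < r"
    then obtain N where N: "\<And>m. m \<ge> N \<Longrightarrow> \<bar>w m x - u x\<bar> < r / 2"
      using LIMSEQ_D[OF assms, of "r / 2"] by auto
    have "norm (tail_dev w u n x - 0) < r" if "N \<le> n" for n
    proof -
      have "tail_dev w u n x \<le> r / 2"
        unfolding tail_dev_def using N that by (intro cSUP_least) (auto intro: less_imp_le)
      moreover have "0 \<le> tail_dev w u n x" using ge[of n n] by simp
      ultimately show ?thesis using \<open>0 < r\<close> by simp
    qed
    then show "\<exists>N. \<forall>n\<ge>N. norm (tail_dev w u n x - 0) < r" by blast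
  qed
qed

definition tail_set :: "real \<Rightarrow> (nat \<Rightarrow> real \<Rightarrow> real) \<Rightarrow> (real \<Rightarrow> real) \<Rightarrow> nat \<Rightarrow> (real \<Rightarrow> real) set" where
  "tail_set a w u n = {v \<in> Kset a. \<forall>x. \<bar>v x - u x\<bar> \<le> tail_dev w u n x}"

lemma
  assumes w: "\<And>n. w n \<in> Kset a" and pw: "\<And>x. (\<lambda>n. w n x) \<longlonglongrightarrow> u x"
  shows tail_set_mem: "n \<le> m \<Longrightarrow> w m \<in> tail_set a w u n"
    and tail_set_antimono: "n \<le> m \<Longrightarrow> tail_set a w u m \<subseteq> tail_set a w u n"
    and tail_set_midpoint: "v \<in> tail_set a w u n \<Longrightarrow> v' \<in> tail_set a w u n
      \<Longrightarrow> (\<lambda>x. (1/2) * v x + (1/2) * v' x) \<in> tail_set a w u n"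
    and tail_set_tendsto: "(\<And>n. vs n \<in> tail_set a w u n) \<Longrightarrow> (\<lambda>n. vs n x) \<longlonglongrightarrow> u x"
proof -
  show "n \<le> m \<Longrightarrow> w m \<in> tail_set a w u n" for n m
    using w tail_dev_ge[where w=w and u=u, OF pw] by (simp add: tail_set_def)
  show "n \<le> m \<Longrightarrow> tail_set a w u m \<subseteq> tail_set a w u n" for n m
    using tail_dev_antimono[where w=w and u=u, OF pw] by (auto simp: tail_set_def intro: order_trans)
  show "(\<lambda>x. (1/2) * v x + (1/2) * v' x) \<in> tail_set a w u n"
    if "v \<in> tail_set a w u n" "v' \<in> tail_set a w u n" for v v' n
  proof -
    have K: "v \<in> Kset a" "v' \<in> Kset a" and dev: "\<And>x. \<bar>v x - u x\<bar> \<le> tail_dev w u n x"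
      "\<And>x. \<bar>v' x - u x\<bar> \<le> tail_dev w u n x" using that by (auto simp: tail_set_def)
    have "(\<lambda>x. (1/2) * v x + (1/2) * v' x) \<in> Kset a"
    proof (rule KsetI)
      show "(\<lambda>x. (1/2) * v x + (1/2) * v' x) \<in> H1"
        using K by (intro H1_linear_combination(1)) (auto simp: Kset_def)
      show "\<bar>(1/2) * v x + (1/2) * v' x\<bar> \<le> 1" for x
        using Kset_abs_le_1[OF K(1), of x] Kset_abs_le_1[OF K(2), of x] by linarith
    qed (use K in \<open>simp add: Kset_def\<close>)
    moreover have "\<bar>(1/2) * v x + (1/2) * v' x - u x\<bar> \<le> tail_dev w u n x" for x
      using dev[of x] by linarith
    ultimately show ?thesis by (simp add: tail_set_def)
  qed
  show "(\<lambda>n. vs n x) \<longlonglongrightarrow> u x" if "\<And>n. vs n \<in> tail_set a w u n"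
  proof -
    have "(\<lambda>n. vs n x - u x) \<longlonglongrightarrow> 0"
    proof (rule Lim_null_comparison[OF always_eventually])
      show "\<forall>n. norm (vs n x - u x) \<le> tail_dev w u n x" using that by (simp add: tail_set_def)
    qed (rule tail_dev_tendsto_0[where w=w and u=u, OF pw])
    then show ?thesis by (simp add: LIM_zero_iff)
  qed
qed

lemma tail_set_near_minimizers_Cauchy:
  fixes V0 :: "real \<Rightarrow> real"
  assumes V0: "V0 \<in> borel_measurable lborel" "AE x in lborel. \<bar>V0 x\<bar> \<le> K"
    and cV: "AE x in lborel. c \<le> V0 x" "0 < c"
    and w: "\<And>n. w n \<in> Kset a" and pw: "\<And>x. (\<lambda>n. w n x) \<longlonglongrightarrow> u x"
    and upper: "\<And>n. (INF f\<in>tail_set a w u n. quad_energy V0 f) \<le> M"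
    and v: "\<And>n. v n \<in> tail_set a w u n"
    and near: "\<And>n. quad_energy V0 (v n) \<le> (INF f\<in>tail_set a w u n. quad_energy V0 f) + 1 / Suc n"
    and "0 < e"
  shows "\<exists>N. \<forall>n\<ge>N. \<forall>m\<ge>N. (\<integral>x. (H1_deriv (v n) x - H1_deriv (v m) x)\<^sup>2 \<partial>lborel) < e"
    "\<exists>N. \<forall>n\<ge>N. \<forall>m\<ge>N. (\<integral>x. (v n x - v m x)\<^sup>2 \<partial>lborel) < e"
proof -
  let ?Q = "quad_energy V0" and ?C = "tail_set a w u"
  have CH: "f \<in> H1" if "f \<in> ?C n" for f n using that by (simp add: tail_set_def Kset_def)
  have "\<exists>N. \<forall>n\<ge>N. \<forall>m\<ge>N. (\<integral>x. (H1_deriv (v n) x - H1_deriv (v m) x)\<^sup>2 \<partial>lborel)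
      + c * (\<integral>x. (v n x - v m x)\<^sup>2 \<partial>lborel) < e" if "0 < e" for e
  proof (rule near_minimizers_Cauchy[where Q="?Q" and C="?C" and M=M and v=v
        and mid="\<lambda>f g x. (1/2) * f x + (1/2) * g x"])
    show "?C m \<subseteq> ?C n" if "n \<le> m" for n m by (rule tail_set_antimono[OF w pw that])
    show "(\<lambda>x. (1/2) * f x + (1/2) * g x) \<in> ?C n" if "f \<in> ?C n" "g \<in> ?C n" for n f g
      by (rule tail_set_midpoint[OF w pw that])
    show "(\<integral>x. (H1_deriv f x - H1_deriv g x)\<^sup>2 \<partial>lborel) + c * (\<integral>x. (f x - g x)\<^sup>2 \<partial>lborel)
        \<le> 2 * (?Q f + ?Q g - 2 * ?Q (\<lambda>x. (1/2) * f x + (1/2) * g x))"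
      if "f \<in> ?C n" "g \<in> ?C n" for n f g
      by (rule quad_energy_midpoint[OF V0 cV(1) CH[OF that(1)] CH[OF that(2)]])
    show "bdd_below (?Q ` ?C n)" for n
      using quad_energy_lower_bound(3)[OF V0 cV(1) less_imp_le[OF cV(2)]] CH
      by (intro bdd_belowI2) blast
  qed (use upper v near that in auto)
  from Cauchy_weighted_sum_split[OF this cV(2) _ _ \<open>0 < e\<close>] show
    "\<exists>N. \<forall>n\<ge>N. \<forall>m\<ge>N. (\<integral>x. (H1_deriv (v n) x - H1_deriv (v m) x)\<^sup>2 \<partial>lborel) < e"
    "\<exists>N. \<forall>n\<ge>N. \<forall>m\<ge>N. (\<integral>x. (v n x - v m x)\<^sup>2 \<partial>lborel) < e" by simp_all
qed

lemma quad_energy_lsc_on_Kset: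
  fixes V0 :: "real \<Rightarrow> real"
  assumes V0: "V0 \<in> borel_measurable lborel" "AE x in lborel. \<bar>V0 x\<bar> \<le> K"
    and cV: "AE x in lborel. c \<le> V0 x" "0 < c"
    and w: "\<And>n. w n \<in> Kset a" and pw: "\<And>x. (\<lambda>n. w n x) \<longlonglongrightarrow> u x"
    and q: "\<And>n. quad_energy V0 (w n) \<le> q n" "q \<longlonglongrightarrow> L"
  shows "u \<in> Kset a" "quad_energy V0 u \<le> L"
proof -
  let ?Q = "quad_energy V0" and ?C = "tail_set a w u"
  let ?d = "\<lambda>n. INF v\<in>?C n. ?Q v"
  have CH: "v \<in> H1" if "v \<in> ?C n" for v n using that by (simp add: tail_set_def Kset_def)
  note Qlow = quad_energy_lower_bound[OF V0 cV(1) less_imp_le[OF cV(2)]]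
  obtain M where M: "\<And>n. q n \<le> M"
    using convergent_imp_Bseq[of q] q(2) by (auto simp: convergent_def Bseq_def abs_le_iff)
  have wM: "(\<integral>x. (H1_deriv (w n) x)\<^sup>2 \<partial>lborel) \<le> M" for n
    using Qlow(2)[of "w n"] w[of n] q(1)[of n] M[of n] by (simp add: Kset_def)
  note u = Kset_pointwise_limit[OF w wM pw]
  have bdd: "bdd_below (?Q ` ?C n)" for n using Qlow(3) CH by (intro bdd_belowI2) blast
  have d_le_q: "?d n \<le> q n" for n
    using cINF_lower[OF bdd tail_set_mem[OF w pw order_refl, of n]] q(1)[of n] by linarith
  obtain v where vC: "\<And>n. v n \<in> ?C n" and near: "\<And>n. ?Q (v n) < ?d n + 1 / Suc n"
    using near_minimizers[of ?C, OF _ bdd] tail_set_mem[OF w pw order_refl] by blast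
  have "?d n \<le> M" for n using d_le_q[of n] M[of n] by linarith
  note Cauchy = tail_set_near_minimizers_Cauchy[OF V0 cV w pw this vC less_imp_le[OF near]]
  note lim = H1_limit[OF CH[OF vC] tail_set_tendsto[OF w pw vC] u(1) Cauchy(2) Cauchy(1)]
  show "u \<in> Kset a" by (intro KsetI lim(1) u(2,3))
  have Qv: "(\<lambda>n. ?Q (v n)) \<longlonglongrightarrow> ?Q u" by (rule quad_energy_tendsto[OF V0 CH[OF vC] lim])
  have "(\<lambda>n. 1 / real (Suc n)) \<longlonglongrightarrow> 0"
    using LIMSEQ_inverse_real_of_nat by (simp add: inverse_eq_divide)
  from tendsto_diff[OF Qv this] have Qv': "(\<lambda>n. ?Q (v n) - 1 / Suc n) \<longlonglongrightarrow> ?Q u" by simp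
  have "?d \<longlonglongrightarrow> ?Q u"
  proof (rule tendsto_sandwich[OF always_eventually always_eventually Qv' Qv])
    show "\<forall>n. ?Q (v n) - 1 / Suc n \<le> ?d n" using near by (meson diff_le_eq less_imp_le)
    show "\<forall>n. ?d n \<le> ?Q (v n)" using cINF_lower[OF bdd vC] by blast
  qed
  then show "?Q u \<le> L" by (rule LIMSEQ_le[OF _ q(2)]) (use d_le_q in auto)
qed

context
  fixes V0 :: "real \<Rightarrow> real" and mu_p mu_m :: "real measure" and c K :: real
  assumes V0: "V0 \<in> borel_measurable lborel" "AE x in lborel. \<bar>V0 x\<bar> \<le> K"
    and cV: "AE x in lborel. c \<le> V0 x" "0 < c"
    and mu: "finite_borel_measure mu_p" "finite_borel_measure mu_m"
begin

lemma Ifun_lower_bound: "u \<in> Kset a \<Longrightarrow> - measure mu_m (space mu_m) \<le> Ifun u V0 mu_p mu_m"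
  using quad_energy_lower_bound(3)[OF V0 cV(1) less_imp_le[OF cV(2)], of u]
    measure_energy_lower_bound[OF mu, of u a] by (simp add: Ifun_eq Kset_def)

lemma Ifun_sublevel_deriv_bound:
  assumes "u \<in> Kset a" "Ifun u V0 mu_p mu_m \<le> B"
  shows "(\<integral>x. (H1_deriv u x)\<^sup>2 \<partial>lborel) \<le> B + measure mu_m (space mu_m)"
  using quad_energy_lower_bound(2)[OF V0 cV(1) less_imp_le[OF cV(2)], of u]
    measure_energy_lower_bound[OF mu assms(1)] assms by (simp add: Ifun_eq Kset_def)

lemma Ifun_lsc_on_Kset:
  assumes w: "\<And>n. w n \<in> Kset a" and pw: "\<And>x. (\<lambda>n. w n x) \<longlonglongrightarrow> u x"
    and b: "\<And>n. Ifun (w n) V0 mu_p mu_m \<le> b n" "b \<longlonglongrightarrow> L"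
  shows "u \<in> Kset a" "Ifun u V0 mu_p mu_m \<le> L"
proof -
  let ?E = "measure_energy mu_p mu_m"
  have "quad_energy V0 (w n) \<le> b n - ?E (w n)" for n using b(1)[of n] by (simp add: Ifun_eq)
  note lsc = quad_energy_lsc_on_Kset[OF V0 cV w pw this tendsto_diff[OF b(2)
        measure_energy_tendsto[OF mu w pw]]]
  then show "u \<in> Kset a" "Ifun u V0 mu_p mu_m \<le> L" by (simp_all add: Ifun_eq)
qed

end

theorem theorem5p2:
  fixes V0 :: "real \<Rightarrow> real" and mu_p mu_m :: "real measure" and a :: real
  assumes "V0 \<in> borel_measurable lborel"
    and "esssup lborel (\<lambda>x. ereal \<bar>V0 x\<bar>) < \<infinity>"
    and "esssup lborel (\<lambda>x. ereal (- V0 x)) < 0"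
    and "finite_borel_measure mu_p" and "finite_borel_measure mu_m"
  shows "\<exists>u_a \<in> Kset a. (\<forall>u \<in> Kset a. Ifun u_a V0 mu_p mu_m \<le> Ifun u V0 mu_p mu_m)
                      \<and> Ffun a V0 mu_p mu_m = Ifun u_a V0 mu_p mu_m"
proof -
  obtain c K where c: "0 < c" and cV: "AE x in lborel. c \<le> V0 x" and KV: "AE x in lborel. \<bar>V0 x\<bar> \<le> K"
    using esssup_potential_bounds[OF assms(2,3)] by blast
  note hyps = assms(1) KV cV c assms(4,5)
  let ?I = "\<lambda>u. Ifun u V0 mu_p mu_m" and ?F = "Ffun a V0 mu_p mu_m"
  have bdd: "bdd_below (?I ` Kset a)" using Ifun_lower_bound[OF hyps] by (intro bdd_belowI2)
  have F_le: "?F \<le> ?I u" if "u \<in> Kset a" for u unfolding Ffun_def by (rule cINF_lower[OF bdd that])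
  obtain us where us: "\<And>n. us n \<in> Kset a" "\<And>n. ?I (us n) < ?F + 1 / Suc n"
    using near_minimizers[of "\<lambda>_. Kset a", OF Kset_nonempty bdd] unfolding Ffun_def by blast
  have "1 / real (Suc n) \<le> 1" for n by simp
  then have "?I (us n) \<le> ?F + 1" for n using us(2)[of n] by (smt (verit))
  then obtain s u where s: "strict_mono s" and pw: "\<And>x. (\<lambda>n. us (s n) x) \<longlonglongrightarrow> u x"
    using Kset_pointwise_convergent_subseq us(1) Ifun_sublevel_deriv_bound[OF hyps us(1)] by blast
  have lim: "(\<lambda>n. ?F + 1 / real (Suc (s n))) \<longlonglongrightarrow> ?F + 0"
    using LIMSEQ_subseq_LIMSEQ[OF LIMSEQ_inverse_real_of_nat s]
    by (intro tendsto_add tendsto_const) (simp add: o_def inverse_eq_divide)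
  have "?I (us (s n)) \<le> ?F + 1 / Suc (s n)" for n using us(2)[of "s n"] by simp
  note lsc = Ifun_lsc_on_Kset[OF hyps, where w="\<lambda>n. us (s n)", OF us(1) pw this lim]
  from lsc have "u \<in> Kset a" "?I u \<le> ?F" by simp_all
  then show ?thesis using F_le by (intro bexI[of _ u]) (auto intro: order_trans antisym)
qed

end
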